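(* Let $E$ be a finite directed graph with no sinks, $Z$ a weight sequence and $p\ge1$. Then $Z$ satisfies Condition A(p) if and only if $u_\alpha z=zu_\alpha$ for every path $\alpha$ with $|\alpha|=p$. In that case also $u_\alpha^*z=zu_\alpha^*$ for every path $\alpha$ with $|\alpha|=p$.
   Context: Graph conventions: $E=(E^0,E^1,s,r)$ finite directed graph; paths $\alpha=e_1\cdots e_k$ with $s(e_j)=r(e_{j+1})$, $|\alpha|=k$. Fock setup: $A=C(E^0)$, $X_E$ the graph correspondence over $A$; $X_E^{\otimes k}$ has basis $\{\delta_\alpha:|\alpha|=k\}$ with $\delta_\alpha\otimes\delta_\beta=\delta_{\alpha\beta}$ if $s(\alpha)=r(\beta)$, else $0$. $\mathcal{F}(X_E)=\bigoplus_kX_E^{\otimes k}$, $\mathcal{K}$ compacts, $S_e\delta_\beta=\delta_{e\beta}$ (or $0$). Weight sequence $Z=\{Z_k\}$ ($Z_k$ adjointable on $X_E^{\otimes k}$, commuting with left $A$-action, $Z_0=I$, uniformly bounded, positive invertible, $Z_k\ge\epsilon I$ for $k\ge1$), $Z=\mathrm{diag}(Z_k)$; $q$ the quotient modulo $\mathcal{K}$; $u_e=q(S_e)$, $u_\alpha=u_{e_1}\cdots u_{e_k}$, $z=q(Z)$. Condition A(p): $\lim_{k\to\infty}\|I_p\otimes Z_k-Z_{k+p}\|=0$, where $(I_p\otimes Z_k)\delta_{\beta\gamma}=\delta_\beta\otimes Z_k\delta_\gamma$ for $|\beta|=p$, $|\gamma|=k$. *)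

theory Defs
  imports "HOL-Analysis.Analysis"
begin

text \<open>A path of length k is represented as a pair (v, es): es = [e1,...,ek] with
  s(e_j) = r(e_(j+1)) and v = s(ek) the source vertex; (v, []) is the vertex v
  (path of length 0). These index the canonical basis delta_alpha of the Fock module.\<close>

type_synonym ('v,'e) gpath = "'v \<times> 'e list"

definition is_path :: "('e \<Rightarrow> 'v) \<Rightarrow> ('e \<Rightarrow> 'v) \<Rightarrow> ('v,'e) gpath \<Rightarrow> bool" where
  "is_path s r \<alpha> = (snd \<alpha> = [] \<or>
     (fst \<alpha> = s (last (snd \<alpha>)) \<and>
      (\<forall>i. Suc i < length (snd \<alpha>) \<longrightarrow> s (snd \<alpha> ! i) = r (snd \<alpha> ! Suc i))))"

definition fock_paths :: "('e \<Rightarrow> 'v) \<Rightarrow> ('e \<Rightarrow> 'v) \<Rightarrow> ('v,'e) gpath set" where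
  "fock_paths s r = {\<alpha>. is_path s r \<alpha>}"

definition paths_len :: "('e \<Rightarrow> 'v) \<Rightarrow> ('e \<Rightarrow> 'v) \<Rightarrow> nat \<Rightarrow> ('v,'e) gpath set" where
  "paths_len s r k = {\<alpha> \<in> fock_paths s r. length (snd \<alpha>) = k}"

definition psrc :: "('v,'e) gpath \<Rightarrow> 'v" where
  "psrc \<alpha> = fst \<alpha>"

definition prange :: "('e \<Rightarrow> 'v) \<Rightarrow> ('v,'e) gpath \<Rightarrow> 'v" where
  "prange r \<alpha> = (if snd \<alpha> = [] then fst \<alpha> else r (hd (snd \<alpha>)))"

definition no_sinks :: "('e \<Rightarrow> 'v) \<Rightarrow> bool" where
  "no_sinks s = (\<forall>v. \<exists>e. s e = v)"

definition ell2 :: "'a set \<Rightarrow> ('a \<Rightarrow> complex) set" where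
  "ell2 P = {x. (\<forall>a. a \<notin> P \<longrightarrow> x a = 0) \<and> (\<lambda>a. (cmod (x a))\<^sup>2) summable_on P}"

definition norm2 :: "'a set \<Rightarrow> ('a \<Rightarrow> complex) \<Rightarrow> real" where
  "norm2 P x = sqrt (infsum (\<lambda>a. (cmod (x a))\<^sup>2) P)"

definition inner2 :: "'a set \<Rightarrow> ('a \<Rightarrow> complex) \<Rightarrow> ('a \<Rightarrow> complex) \<Rightarrow> complex" where
  "inner2 P x y = infsum (\<lambda>a. x a * cnj (y a)) P"

definition compact_op :: "'a set \<Rightarrow> (('a \<Rightarrow> complex) \<Rightarrow> ('a \<Rightarrow> complex)) \<Rightarrow> bool" where
  "compact_op P T = (\<forall>\<epsilon>>0. \<exists>F. finite F \<and> F \<subseteq> ell2 P \<and>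
      (\<forall>x\<in>ell2 P. norm2 P x \<le> 1 \<longrightarrow> (\<exists>y\<in>F. norm2 P (\<lambda>a. T x a - y a) < \<epsilon>)))"

definition is_adj :: "'a set \<Rightarrow> (('a \<Rightarrow> complex) \<Rightarrow> ('a \<Rightarrow> complex))
    \<Rightarrow> (('a \<Rightarrow> complex) \<Rightarrow> ('a \<Rightarrow> complex)) \<Rightarrow> bool" where
  "is_adj P T T' = ((\<forall>x\<in>ell2 P. T' x \<in> ell2 P) \<and>
      (\<forall>x\<in>ell2 P. \<forall>y\<in>ell2 P. inner2 P (T x) y = inner2 P x (T' y)))"

definition commutes_mod_compact :: "'a set \<Rightarrow> (('a \<Rightarrow> complex) \<Rightarrow> ('a \<Rightarrow> complex))
    \<Rightarrow> (('a \<Rightarrow> complex) \<Rightarrow> ('a \<Rightarrow> complex)) \<Rightarrow> bool" where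
  "commutes_mod_compact P T Z = compact_op P (\<lambda>x a. T (Z x) a - Z (T x) a)"

definition matop :: "'a set \<Rightarrow> ('a \<Rightarrow> 'a \<Rightarrow> complex) \<Rightarrow> ('a \<Rightarrow> complex) \<Rightarrow> ('a \<Rightarrow> complex)" where
  "matop S M x = (\<lambda>a. if a \<in> S then (\<Sum>b\<in>S. M a b * x b) else 0)"

definition fin_opnorm :: "'a set \<Rightarrow> ('a \<Rightarrow> 'a \<Rightarrow> complex) \<Rightarrow> real" where
  "fin_opnorm S M = Sup ((\<lambda>x. norm2 S (matop S M x)) ` {x \<in> ell2 S. norm2 S x \<le> 1})"

text \<open>Zm k alpha beta is the matrix entry of Z_k in the basis delta of X_E^{(tensor k)}.\<close>
definition weight_seq :: "('e::finite \<Rightarrow> 'v::finite) \<Rightarrow> ('e \<Rightarrow> 'v)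
    \<Rightarrow> (nat \<Rightarrow> ('v,'e) gpath \<Rightarrow> ('v,'e) gpath \<Rightarrow> complex) \<Rightarrow> bool" where
  "weight_seq s r Zm =
    ((\<forall>k \<alpha> \<beta>. Zm k \<alpha> \<beta> \<noteq> 0 \<longrightarrow> \<alpha> \<in> paths_len s r k \<and> \<beta> \<in> paths_len s r k
        \<and> psrc \<alpha> = psrc \<beta> \<and> prange r \<alpha> = prange r \<beta>)
     \<and> (\<forall>\<alpha> \<beta>. Zm 0 \<alpha> \<beta> = (if \<alpha> = \<beta> \<and> \<alpha> \<in> paths_len s r 0 then 1 else 0))
     \<and> (\<forall>k \<alpha> \<beta>. Zm k \<beta> \<alpha> = cnj (Zm k \<alpha> \<beta>))
     \<and> (\<exists>C. \<forall>k. fin_opnorm (paths_len s r k) (Zm k) \<le> C)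
     \<and> (\<exists>\<epsilon>>0. \<forall>k\<ge>1. \<forall>x.
          \<epsilon> * (\<Sum>\<alpha>\<in>paths_len s r k. (cmod (x \<alpha>))\<^sup>2)
          \<le> Re (\<Sum>\<alpha>\<in>paths_len s r k. \<Sum>\<beta>\<in>paths_len s r k. cnj (x \<alpha>) * Zm k \<alpha> \<beta> * x \<beta>)))"

text \<open>Matrix of I_p tensor Z_k on X_E^{(tensor (k+p))}.\<close>
definition tensorI :: "('e \<Rightarrow> 'v) \<Rightarrow> ('e \<Rightarrow> 'v) \<Rightarrow> nat
    \<Rightarrow> (nat \<Rightarrow> ('v,'e) gpath \<Rightarrow> ('v,'e) gpath \<Rightarrow> complex) \<Rightarrow> nat
    \<Rightarrow> ('v,'e) gpath \<Rightarrow> ('v,'e) gpath \<Rightarrow> complex" where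
  "tensorI s r p Zm k \<alpha> \<beta> =
    (if \<alpha> \<in> paths_len s r (k + p) \<and> \<beta> \<in> paths_len s r (k + p) \<and> take p (snd \<alpha>) = take p (snd \<beta>)
     then Zm k (fst \<alpha>, drop p (snd \<alpha>)) (fst \<beta>, drop p (snd \<beta>)) else 0)"

definition condA :: "('e \<Rightarrow> 'v) \<Rightarrow> ('e \<Rightarrow> 'v)
    \<Rightarrow> (nat \<Rightarrow> ('v,'e) gpath \<Rightarrow> ('v,'e) gpath \<Rightarrow> complex) \<Rightarrow> nat \<Rightarrow> bool" where
  "condA s r Zm p =
    ((\<lambda>k. fin_opnorm (paths_len s r (k + p)) (\<lambda>\<alpha> \<beta>. tensorI s r p Zm k \<alpha> \<beta> - Zm (k + p) \<alpha> \<beta>))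
      \<longlonglongrightarrow> 0)"

definition Zop :: "('e \<Rightarrow> 'v) \<Rightarrow> ('e \<Rightarrow> 'v) \<Rightarrow> (nat \<Rightarrow> ('v,'e) gpath \<Rightarrow> ('v,'e) gpath \<Rightarrow> complex)
    \<Rightarrow> (('v,'e) gpath \<Rightarrow> complex) \<Rightarrow> (('v,'e) gpath \<Rightarrow> complex)" where
  "Zop s r Zm x = (\<lambda>\<alpha>. if \<alpha> \<in> fock_paths s r
      then (\<Sum>\<beta>\<in>paths_len s r (length (snd \<alpha>)). Zm (length (snd \<alpha>)) \<alpha> \<beta> * x \<beta>) else 0)"

text \<open>Creation operator S_e: delta_beta maps to delta_(e beta) if s(e) = r(beta), else to 0.\<close>
definition Sedge :: "('e \<Rightarrow> 'v) \<Rightarrow> ('e \<Rightarrow> 'v) \<Rightarrow> 'e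
    \<Rightarrow> (('v,'e) gpath \<Rightarrow> complex) \<Rightarrow> (('v,'e) gpath \<Rightarrow> complex)" where
  "Sedge s r e x = (\<lambda>\<gamma>. if \<gamma> \<in> fock_paths s r then
      (case snd \<gamma> of [] \<Rightarrow> 0 | e' # es \<Rightarrow> if e' = e then x (fst \<gamma>, es) else 0) else 0)"

definition Spath :: "('e \<Rightarrow> 'v) \<Rightarrow> ('e \<Rightarrow> 'v) \<Rightarrow> 'e list
    \<Rightarrow> (('v,'e) gpath \<Rightarrow> complex) \<Rightarrow> (('v,'e) gpath \<Rightarrow> complex)" where
  "Spath s r es = foldr (\<lambda>e T. Sedge s r e \<circ> T) es id"

end

theory Submission
  imports Defs
begin

text \<open>\<open>Z\<close> is block diagonal for the grading of the Fock space by path length, and \<open>S\<^sub>\<alpha>\<close>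
  raises the length by \<open>p = |\<alpha>|\<close>. Hence \<open>[S\<^sub>\<alpha>, Z]\<close> maps level \<open>k\<close> to level \<open>k + p\<close>, and on
  the range of \<open>S\<^sub>\<alpha>\<close> its block is that of \<open>I\<^sub>p \<otimes> Z\<^sub>k - Z\<^sub>k\<^sub>+\<^sub>p\<close>; similarly \<open>[S\<^sub>\<alpha>\<^sup>*, Z]\<close>
  maps level \<open>k + p\<close> to level \<open>k\<close> with block \<open>-S\<^sub>\<alpha>\<^sup>* (I\<^sub>p \<otimes> Z\<^sub>k - Z\<^sub>k\<^sub>+\<^sub>p)\<close>.
  An operator assembled from such blocks between finite-dimensional levels is compact exactly
  when the block norms tend to zero. So Condition A(p) gives both commutation relations modulo the
  compacts. Conversely \<open>I\<^sub>p \<otimes> Z\<^sub>k - Z\<^sub>k\<^sub>+\<^sub>p\<close> is the direct sum, over the paths \<open>\<alpha>\<close> of length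
  \<open>p\<close>, of its blocks on the paths starting with \<open>\<alpha>\<close>, and each of them is controlled by \<open>[S\<^sub>\<alpha>, Z]\<close>.\<close>

section \<open>Block operators between finite levels\<close>

definition level :: "'a set \<Rightarrow> ('a \<Rightarrow> nat) \<Rightarrow> nat \<Rightarrow> 'a set" where
  "level P lvl m = {a\<in>P. lvl a = m}"

definition sqnorm :: "'a set \<Rightarrow> ('a \<Rightarrow> complex) \<Rightarrow> real" where
  "sqnorm A x = (\<Sum>a\<in>A. (cmod (x a))\<^sup>2)"

text \<open>Maps level \<open>\<sigma> m\<close> to level \<open>m\<close> through the kernel \<open>K\<close> (and levels below \<open>m0\<close> to zero);
  both commutators \<open>[S\<^sub>\<alpha>, Z]\<close> and \<open>[S\<^sub>\<alpha>\<^sup>*, Z]\<close> have this shape.\<close>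
definition graded_op :: "'a set \<Rightarrow> ('a \<Rightarrow> nat) \<Rightarrow> (nat \<Rightarrow> nat) \<Rightarrow> nat \<Rightarrow> ('a \<Rightarrow> 'a \<Rightarrow> complex)
    \<Rightarrow> ('a \<Rightarrow> complex) \<Rightarrow> ('a \<Rightarrow> complex)" where
  "graded_op P lvl \<sigma> m0 K x = (\<lambda>\<gamma>. if \<gamma> \<in> P \<and> lvl \<gamma> \<ge> m0
       then (\<Sum>b\<in>level P lvl (\<sigma> (lvl \<gamma>)). K \<gamma> b * x b) else 0)"

lemma sqnorm_nonneg: "sqnorm A x \<ge> 0"
  unfolding sqnorm_def by (simp add: sum_nonneg)

lemma sqnorm_cong: "(\<And>a. a \<in> A \<Longrightarrow> x a = y a) \<Longrightarrow> sqnorm A x = sqnorm A y"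
  unfolding sqnorm_def by simp

lemma sqnorm_uminus [simp]: "sqnorm A (\<lambda>a. - x a) = sqnorm A x"
  unfolding sqnorm_def by simp

lemma sqnorm_mono: "finite B \<Longrightarrow> A \<subseteq> B \<Longrightarrow> sqnorm A x \<le> sqnorm B x"
  unfolding sqnorm_def by (rule sum_mono2) auto

lemma sqrt_sqnorm_add_le:
  "sqrt (sqnorm A (\<lambda>a. x a + y a)) \<le> sqrt (sqnorm A x) + sqrt (sqnorm A y)"
proof -
  have L2: "sqrt (sqnorm A z) = L2_set (\<lambda>a. cmod (z a)) A" for z
    unfolding sqnorm_def L2_set_def by simp
  have "L2_set (\<lambda>a. cmod (x a + y a)) A \<le> L2_set (\<lambda>a. cmod (x a) + cmod (y a)) A"
    by (rule L2_set_mono) (auto simp: norm_triangle_ineq)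
  also have "\<dots> \<le> L2_set (\<lambda>a. cmod (x a)) A + L2_set (\<lambda>a. cmod (y a)) A"
    by (rule L2_set_triangle_ineq)
  finally show ?thesis by (simp add: L2)
qed

lemma sqrt_sqnorm_sum_le:
  "finite I \<Longrightarrow> sqrt (sqnorm A (\<lambda>a. \<Sum>i\<in>I. f i a)) \<le> (\<Sum>i\<in>I. sqrt (sqnorm A (f i)))"
proof (induction I rule: finite_induct)
  case empty
  then show ?case by (simp add: sqnorm_def)
next
  case (insert i I)
  then have "sqrt (sqnorm A (\<lambda>a. \<Sum>j\<in>insert i I. f j a))
      \<le> sqrt (sqnorm A (f i)) + sqrt (sqnorm A (\<lambda>a. \<Sum>j\<in>I. f j a))"
    using sqrt_sqnorm_add_le[of A "f i"] by simp
  with insert show ?case by simp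
qed

lemma sqnorm_scaled:
  fixes x :: "'a \<Rightarrow> complex"
  assumes "t > 0"
  shows "sqnorm A (\<lambda>a. x a / sqrt t) = sqnorm A x / t"
  unfolding sqnorm_def using assms
  by (simp add: norm_divide power_divide sum_divide_distrib)

lemma nonneg_summable_on_infsum_le:
  fixes f :: "'a \<Rightarrow> real"
  assumes "\<And>a. a \<in> A \<Longrightarrow> f a \<ge> 0"
    and "\<And>F. finite F \<Longrightarrow> F \<subseteq> A \<Longrightarrow> sum f F \<le> B"
  shows "f summable_on A \<and> infsum f A \<le> B"
proof -
  have "f summable_on A"
    by (rule nonneg_bdd_above_summable_on) (use assms in \<open>auto intro!: bdd_aboveI2[where M=B]\<close>)
  then show ?thesis using infsum_le_finite_sums assms by blast
qed

lemma ell2_outside: "x \<in> ell2 P \<Longrightarrow> a \<notin> P \<Longrightarrow> x a = 0"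
  by (simp add: ell2_def)

lemma sqnorm_le_ell2_infsum:
  assumes "x \<in> ell2 P" "finite F" "F \<subseteq> P"
  shows "sqnorm F x \<le> infsum (\<lambda>a. (cmod (x a))\<^sup>2) P"
  unfolding sqnorm_def
  by (rule finite_sum_le_infsum) (use assms in \<open>auto simp: ell2_def\<close>)

lemma ell2_finite_support:
  assumes "finite A" "A \<subseteq> P" "\<And>a. a \<notin> A \<Longrightarrow> x a = 0"
  shows "x \<in> ell2 P" and "infsum (\<lambda>a. (cmod (x a))\<^sup>2) P = sqnorm A x"
proof -
  have "(\<lambda>a. (cmod (x a))\<^sup>2) summable_on P"
    by (subst summable_on_cong_neutral[where T=A and g="\<lambda>a. (cmod (x a))\<^sup>2"]) (use assms in auto)
  then show "x \<in> ell2 P" using assms unfolding ell2_def by auto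
  have "infsum (\<lambda>a. (cmod (x a))\<^sup>2) P = infsum (\<lambda>a. (cmod (x a))\<^sup>2) A"
    by (rule infsum_cong_neutral) (use assms in auto)
  then show "infsum (\<lambda>a. (cmod (x a))\<^sup>2) P = sqnorm A x"
    using assms by (simp add: sqnorm_def)
qed

lemma ell2_diff:
  assumes "x \<in> ell2 P" "y \<in> ell2 P"
  shows "(\<lambda>a. x a - y a) \<in> ell2 P"
proof -
  have "(\<lambda>a. 2 * (cmod (x a))\<^sup>2 + 2 * (cmod (y a))\<^sup>2) summable_on P"
    using assms by (intro summable_on_add summable_on_cmult_right) (auto simp: ell2_def)
  moreover have "(cmod (x a - y a))\<^sup>2 \<le> 2 * (cmod (x a))\<^sup>2 + 2 * (cmod (y a))\<^sup>2" for a
  proof -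
    have "(cmod (x a - y a))\<^sup>2 \<le> (cmod (x a) + cmod (y a))\<^sup>2"
      by (intro power_mono norm_triangle_ineq4) auto
    also have "\<dots> \<le> 2 * (cmod (x a))\<^sup>2 + 2 * (cmod (y a))\<^sup>2"
      by (simp add: power2_sum) (smt (verit) sum_squares_bound)
    finally show ?thesis .
  qed
  ultimately have "(\<lambda>a. (cmod (x a - y a))\<^sup>2) summable_on P"
    by (rule summable_on_comparison_test) auto
  then show ?thesis using assms by (auto simp: ell2_def)
qed

lemma level_subset: "level P lvl m \<subseteq> P"
  unfolding level_def by auto

lemma sum_sqnorm_level:
  assumes "\<And>m. finite (level P lvl m)" "finite M" "inj_on \<sigma> M"
  shows "(\<Sum>m\<in>M. sqnorm (level P lvl (\<sigma> m)) x) = sqnorm (\<Union>m\<in>M. level P lvl (\<sigma> m)) x"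
proof -
  have "(\<Sum>m\<in>M. sqnorm (level P lvl (\<sigma> m)) x) = (\<Sum>j\<in>\<sigma> ` M. sqnorm (level P lvl j) x)"
    using assms by (simp add: sum.reindex)
  also have "\<dots> = sqnorm (\<Union>j\<in>\<sigma> ` M. level P lvl j) x"
    unfolding sqnorm_def by (rule sum.UNION_disjoint[symmetric]) (use assms in \<open>auto simp: level_def\<close>)
  finally show ?thesis by simp
qed

lemma sum_sqnorm_level_le_infsum:
  assumes "\<And>m. finite (level P lvl m)" "finite M" "inj_on \<sigma> M" "x \<in> ell2 P"
  shows "(\<Sum>m\<in>M. sqnorm (level P lvl (\<sigma> m)) x) \<le> infsum (\<lambda>a. (cmod (x a))\<^sup>2) P"
  unfolding sum_sqnorm_level[OF assms(1-3)]
  by (rule sqnorm_le_ell2_infsum) (use assms in \<open>auto simp: level_def\<close>)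

lemma graded_op_diff:
  "graded_op P lvl \<sigma> m0 K (\<lambda>a. x a - y a) \<gamma> = graded_op P lvl \<sigma> m0 K x \<gamma> - graded_op P lvl \<sigma> m0 K y \<gamma>"
  by (simp add: graded_op_def sum_subtractf ring_distribs)

lemma graded_op_cong:
  assumes "\<gamma> \<in> level P lvl m" "\<And>a. a \<in> level P lvl (\<sigma> m) \<Longrightarrow> x a = y a"
  shows "graded_op P lvl \<sigma> m0 K x \<gamma> = graded_op P lvl \<sigma> m0 K y \<gamma>"
  using assms by (auto simp: graded_op_def level_def intro!: sum.cong)

lemma sum_graded_op_le:
  assumes "\<And>m. finite (level P lvl m)" "finite S" "S \<subseteq> P"
  shows "(\<Sum>a\<in>S. (cmod (graded_op P lvl \<sigma> m0 K x a))\<^sup>2)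
     \<le> (\<Sum>m\<in>lvl ` S \<inter> {m0..}. sqnorm (level P lvl m) (graded_op P lvl \<sigma> m0 K x))"
proof -
  let ?f = "\<lambda>a. (cmod (graded_op P lvl \<sigma> m0 K x a))\<^sup>2"
  let ?M = "lvl ` S \<inter> {m0..}"
  have "(\<Sum>a\<in>S. ?f a) = (\<Sum>a\<in>S \<inter> {a. lvl a \<ge> m0}. ?f a)"
    by (rule sum.mono_neutral_right) (use assms in \<open>auto simp: graded_op_def\<close>)
  also have "\<dots> \<le> (\<Sum>a\<in>(\<Union>m\<in>?M. level P lvl m). ?f a)"
    by (rule sum_mono2) (use assms in \<open>auto simp: level_def\<close>)
  also have "\<dots> = (\<Sum>m\<in>?M. sqnorm (level P lvl m) (graded_op P lvl \<sigma> m0 K x))"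
    using sum_sqnorm_level[OF assms(1), of ?M id] assms by (simp add: sqnorm_def)
  finally show ?thesis .
qed

lemma graded_op_infsum_le:
  assumes "\<And>m. finite (level P lvl m)"
    and "\<And>m. m \<ge> m0 \<Longrightarrow> sqnorm (level P lvl m) (graded_op P lvl \<sigma> m0 K x) \<le> c m"
    and "\<And>M. finite M \<Longrightarrow> M \<subseteq> {m0..} \<Longrightarrow> sum c M \<le> B"
  shows "graded_op P lvl \<sigma> m0 K x \<in> ell2 P"
    and "infsum (\<lambda>a. (cmod (graded_op P lvl \<sigma> m0 K x a))\<^sup>2) P \<le> B"
proof -
  have "(\<lambda>a. (cmod (graded_op P lvl \<sigma> m0 K x a))\<^sup>2) summable_on P
      \<and> infsum (\<lambda>a. (cmod (graded_op P lvl \<sigma> m0 K x a))\<^sup>2) P \<le> B"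
  proof (rule nonneg_summable_on_infsum_le)
    fix S assume S: "finite S" "S \<subseteq> P"
    have "(\<Sum>a\<in>S. (cmod (graded_op P lvl \<sigma> m0 K x a))\<^sup>2)
        \<le> (\<Sum>m\<in>lvl ` S \<inter> {m0..}. sqnorm (level P lvl m) (graded_op P lvl \<sigma> m0 K x))"
      by (rule sum_graded_op_le[OF assms(1) S])
    also have "\<dots> \<le> sum c (lvl ` S \<inter> {m0..})"
      by (rule sum_mono) (use assms(2) in auto)
    also have "\<dots> \<le> B" using S by (intro assms(3)) auto
    finally show "(\<Sum>a\<in>S. (cmod (graded_op P lvl \<sigma> m0 K x a))\<^sup>2) \<le> B" .
  qed auto
  then show "graded_op P lvl \<sigma> m0 K x \<in> ell2 P"
    and "infsum (\<lambda>a. (cmod (graded_op P lvl \<sigma> m0 K x a))\<^sup>2) P \<le> B"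
    by (auto simp: ell2_def graded_op_def)
qed

lemma graded_op_ell2:
  assumes fin: "\<And>m. finite (level P lvl m)" and inj: "inj_on \<sigma> {m0..}"
    and bound: "\<And>x m. m \<ge> m0 \<Longrightarrow>
      sqnorm (level P lvl m) (graded_op P lvl \<sigma> m0 K x) \<le> C * sqnorm (level P lvl (\<sigma> m)) x"
    and x: "x \<in> ell2 P" and C: "C \<ge> 0"
  shows "graded_op P lvl \<sigma> m0 K x \<in> ell2 P"
proof (rule graded_op_infsum_le[OF fin bound])
  fix M assume "finite M" "M \<subseteq> {m0..}"
  then have "(\<Sum>m\<in>M. sqnorm (level P lvl (\<sigma> m)) x) \<le> infsum (\<lambda>a. (cmod (x a))\<^sup>2) P"
    by (intro sum_sqnorm_level_le_infsum[OF fin _ _ x] inj_on_subset[OF inj])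
  then show "(\<Sum>m\<in>M. C * sqnorm (level P lvl (\<sigma> m)) x) \<le> C * infsum (\<lambda>a. (cmod (x a))\<^sup>2) P"
    using C by (simp add: sum_distrib_left[symmetric] mult_left_mono)
qed

lemma finite_net_unit_cube:
  assumes "finite I" "\<eta> > 0"
  obtains G :: "('a \<Rightarrow> complex) set"
  where "finite G" "\<And>g a. g \<in> G \<Longrightarrow> a \<notin> I \<Longrightarrow> g a = 0"
    "\<And>x. (\<And>a. a \<in> I \<Longrightarrow> cmod (x a) \<le> 1) \<Longrightarrow> \<exists>g\<in>G. \<forall>a\<in>I. cmod (x a - g a) < \<eta>"
proof -
  obtain D where D: "finite D" "cball (0::complex) 1 \<subseteq> (\<Union>d\<in>D. ball d \<eta>)"
    using compact_cball[of "0::complex" 1] assms(2) unfolding compact_eq_totally_bounded by metis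
  define G where "G = (\<lambda>g a. if a \<in> I then g a else 0) ` PiE I (\<lambda>_. D)"
  show thesis
  proof (rule that)
    show "finite G" unfolding G_def using assms D by (auto intro!: finite_PiE)
    show "g a = 0" if "g \<in> G" "a \<notin> I" for g a using that unfolding G_def by auto
    fix x assume x: "\<And>a. a \<in> I \<Longrightarrow> cmod (x a) \<le> 1"
    have "\<forall>a\<in>I. \<exists>d\<in>D. cmod (x a - d) < \<eta>"
      using x D(2) by (fastforce simp: subset_eq dist_norm norm_minus_commute)
    then obtain d where d: "\<And>a. a \<in> I \<Longrightarrow> d a \<in> D \<and> cmod (x a - d a) < \<eta>"
      by metis
    define g where "g a = (if a \<in> I then d a else 0)" for a
    have "g = (\<lambda>a. if a \<in> I then restrict d I a else 0)"
      unfolding g_def by auto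
    then have "g \<in> G"
      unfolding G_def using d by (intro image_eqI) auto
    then show "\<exists>g\<in>G. \<forall>a\<in>I. cmod (x a - g a) < \<eta>"
      using d by (intro bexI[of _ g]) (auto simp: g_def)
  qed
qed

lemma graded_op_split_estimate:
  assumes fin: "\<And>m. finite (level P lvl m)" and inj: "inj_on \<sigma> {m0..}"
    and bound: "\<And>x m. m \<ge> m0 \<Longrightarrow>
      sqnorm (level P lvl m) (graded_op P lvl \<sigma> m0 K x) \<le> (b m)\<^sup>2 * sqnorm (level P lvl (\<sigma> m)) x"
    and B: "\<And>m. (b m)\<^sup>2 \<le> B" and e: "\<And>m. m \<ge> N \<Longrightarrow> (b m)\<^sup>2 \<le> e\<^sup>2"
    and I: "I = (\<Union>m\<in>{m0..<N}. level P lvl (\<sigma> m))"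
    and x: "x \<in> ell2 P" and w: "\<And>a. a \<notin> I \<Longrightarrow> w a = x a"
  shows "infsum (\<lambda>a. (cmod (graded_op P lvl \<sigma> m0 K w a))\<^sup>2) P
    \<le> B * sqnorm I w + e\<^sup>2 * infsum (\<lambda>a. (cmod (x a))\<^sup>2) P"
proof (rule graded_op_infsum_le(2)[OF fin bound])
  fix M assume M: "finite M" "M \<subseteq> {m0..}"
  let ?s = "\<lambda>x m. sqnorm (level P lvl (\<sigma> m)) x"
  have inj_M: "inj_on \<sigma> M'" if "M' \<subseteq> M" for M' using inj M that by (auto intro: inj_on_subset)
  have low: "(\<Sum>m\<in>M \<inter> {..<N}. (b m)\<^sup>2 * ?s w m) \<le> B * sqnorm I w"
  proof -
    have "(\<Sum>m\<in>M \<inter> {..<N}. (b m)\<^sup>2 * ?s w m) \<le> (\<Sum>m\<in>M \<inter> {..<N}. B * ?s w m)"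
      by (intro sum_mono mult_right_mono B sqnorm_nonneg)
    also have "\<dots> = B * sqnorm (\<Union>m\<in>M \<inter> {..<N}. level P lvl (\<sigma> m)) w"
      by (simp add: sum_distrib_left[symmetric] sum_sqnorm_level[OF fin] inj_M M)
    also have "\<dots> \<le> B * sqnorm I w"
      using order_trans[OF zero_le_power2 B] M fin
      by (intro mult_left_mono sqnorm_mono) (force simp: I)+
    finally show ?thesis .
  qed
  have high: "(\<Sum>m\<in>M - {..<N}. (b m)\<^sup>2 * ?s w m) \<le> e\<^sup>2 * infsum (\<lambda>a. (cmod (x a))\<^sup>2) P"
  proof -
    have "?s w m = ?s x m" if "m \<in> M - {..<N}" for m
    proof (rule sqnorm_cong)
      fix a assume a: "a \<in> level P lvl (\<sigma> m)"
      have "a \<notin> I"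
        using a that M inj by (auto simp: I level_def dest: inj_onD)
      then show "w a = x a" by (rule w)
    qed
    then have "(\<Sum>m\<in>M - {..<N}. (b m)\<^sup>2 * ?s w m) \<le> (\<Sum>m\<in>M - {..<N}. e\<^sup>2 * ?s x m)"
      using e by (intro sum_mono) (simp add: mult_right_mono sqnorm_nonneg)
    also have "\<dots> \<le> e\<^sup>2 * infsum (\<lambda>a. (cmod (x a))\<^sup>2) P"
      unfolding sum_distrib_left[symmetric]
      by (intro mult_left_mono sum_sqnorm_level_le_infsum[OF fin _ inj_M x]) (use M in auto)
    finally show ?thesis .
  qed
  show "(\<Sum>m\<in>M. (b m)\<^sup>2 * ?s w m) \<le> B * sqnorm I w + e\<^sup>2 * infsum (\<lambda>a. (cmod (x a))\<^sup>2) P"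
    using low high sum.Int_Diff[OF M(1), of "\<lambda>m. (b m)\<^sup>2 * ?s w m" "{..<N}"] by linarith
qed

lemma tendsto_zero_square_bounds:
  fixes b :: "nat \<Rightarrow> real"
  assumes lim: "b \<longlonglongrightarrow> 0" and e: "e > 0"
  obtains B N where "B \<ge> 0" "\<And>m. (b m)\<^sup>2 \<le> B" "\<And>m. m \<ge> N \<Longrightarrow> (b m)\<^sup>2 \<le> e\<^sup>2"
proof -
  obtain B0 where B0: "\<And>m. \<bar>b m\<bar> \<le> B0"
    using convergent_imp_Bseq[OF convergentI[OF lim]] by (metis BseqE real_norm_def)
  obtain N where N: "\<And>m. m \<ge> N \<Longrightarrow> \<bar>b m\<bar> < e"
    using lim e unfolding LIMSEQ_iff by (metis real_norm_def diff_zero)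
  show thesis
  proof (rule that[of "B0\<^sup>2" N])
    show "(b m)\<^sup>2 \<le> B0\<^sup>2" for m using B0[of m] by (metis abs_ge_zero power2_abs power_mono)
    show "(b m)\<^sup>2 \<le> e\<^sup>2" if "m \<ge> N" for m
      using N[OF that] e by (simp add: abs_le_square_iff[symmetric])
  qed simp
qed

lemma exists_pos_mult_square_le:
  fixes K c :: real
  assumes "K \<ge> 0" "c > 0"
  shows "\<exists>\<eta>>0. K * \<eta>\<^sup>2 \<le> c"
proof (intro exI conjI)
  show "sqrt (c / (K + 1)) > 0" using assms by simp
  have "K * (sqrt (c / (K + 1)))\<^sup>2 = K / (K + 1) * c" using assms by simp
  also have "\<dots> \<le> 1 * c" using assms by (intro mult_right_mono) auto
  finally show "K * (sqrt (c / (K + 1)))\<^sup>2 \<le> c" by simp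
qed

lemma graded_op_compact:
  fixes b :: "nat \<Rightarrow> real"
  assumes fin: "\<And>m. finite (level P lvl m)" and inj: "inj_on \<sigma> {m0..}"
    and bound: "\<And>x m. m \<ge> m0 \<Longrightarrow>
      sqnorm (level P lvl m) (graded_op P lvl \<sigma> m0 K x) \<le> (b m)\<^sup>2 * sqnorm (level P lvl (\<sigma> m)) x"
    and lim: "b \<longlonglongrightarrow> 0"
  shows "compact_op P (graded_op P lvl \<sigma> m0 K)"
  unfolding compact_op_def
proof (intro allI impI)
  let ?T = "graded_op P lvl \<sigma> m0 K"
  fix \<epsilon> :: real assume \<epsilon>: "\<epsilon> > 0"
  obtain B N where B_nonneg: "B \<ge> 0" and B: "\<And>m. (b m)\<^sup>2 \<le> B"
    and N: "\<And>m. m \<ge> N \<Longrightarrow> (b m)\<^sup>2 \<le> (\<epsilon>/2)\<^sup>2"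
    using tendsto_zero_square_bounds[OF lim, of "\<epsilon>/2"] \<epsilon> by auto
  have T_ell2: "?T x \<in> ell2 P" if "x \<in> ell2 P" for x
    using bound B by (intro graded_op_ell2[OF fin inj _ that B_nonneg])
      (meson mult_right_mono order_trans sqnorm_nonneg)
  define I where "I = (\<Union>m\<in>{m0..<N}. level P lvl (\<sigma> m))"
  have I: "finite I" "I \<subseteq> P" unfolding I_def using fin by (auto simp: level_def)
  obtain \<eta> where \<eta>: "\<eta> > 0" and \<eta>2: "B * card I * \<eta>\<^sup>2 \<le> \<epsilon>\<^sup>2 / 4"
    using exists_pos_mult_square_le[of "B * card I" "\<epsilon>\<^sup>2 / 4"] B_nonneg \<epsilon> by auto
  obtain G where G: "finite G" "\<And>g a. g \<in> G \<Longrightarrow> a \<notin> I \<Longrightarrow> g a = 0"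
    "\<And>x. (\<And>a. a \<in> I \<Longrightarrow> cmod (x a) \<le> 1) \<Longrightarrow> \<exists>g\<in>G. \<forall>a\<in>I. cmod (x a - g a) < \<eta>"
    using finite_net_unit_cube[OF I(1) \<eta>] by blast
  show "\<exists>F. finite F \<and> F \<subseteq> ell2 P \<and>
      (\<forall>x\<in>ell2 P. norm2 P x \<le> 1 \<longrightarrow> (\<exists>y\<in>F. norm2 P (\<lambda>a. ?T x a - y a) < \<epsilon>))"
  proof (intro exI[of _ "?T ` G"] conjI ballI impI)
    show "finite (?T ` G)" using G(1) by simp
    show "?T ` G \<subseteq> ell2 P"
      using T_ell2 ell2_finite_support(1)[OF I, of g for g] G(2) by blast
    fix x assume x: "x \<in> ell2 P" "norm2 P x \<le> 1"
    have x1: "infsum (\<lambda>a. (cmod (x a))\<^sup>2) P \<le> 1" using x(2) by (simp add: norm2_def)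
    have "cmod (x a) \<le> 1" if "a \<in> I" for a
    proof -
      have "sqnorm {a} x \<le> 1" using sqnorm_le_ell2_infsum[OF x(1), of "{a}"] x1 I that by auto
      then show ?thesis by (simp add: sqnorm_def abs_square_le_1)
    qed
    then obtain g where g: "g \<in> G" "\<forall>a\<in>I. cmod (x a - g a) < \<eta>" using G(3) by blast
    define w where "w a = x a - g a" for a
    have "sqnorm I w \<le> card I * \<eta>\<^sup>2"
      unfolding sqnorm_def w_def using g(2) by (intro sum_bounded_above power_mono) auto
    then have "B * sqnorm I w \<le> B * card I * \<eta>\<^sup>2"
      using B_nonneg mult_left_mono by (fastforce simp: mult.assoc)
    then have "B * sqnorm I w \<le> \<epsilon>\<^sup>2 / 4" using \<eta>2 by linarith
    moreover have "infsum (\<lambda>a. (cmod (?T w a))\<^sup>2) P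
        \<le> B * sqnorm I w + (\<epsilon>/2)\<^sup>2 * infsum (\<lambda>a. (cmod (x a))\<^sup>2) P"
      using G(2)[OF g(1)]
      by (intro graded_op_split_estimate[OF fin inj bound B N I_def x(1)]) (auto simp: w_def)
    moreover have "(\<epsilon>/2)\<^sup>2 * infsum (\<lambda>a. (cmod (x a))\<^sup>2) P \<le> \<epsilon>\<^sup>2 / 4"
      using mult_left_mono[OF x1, of "(\<epsilon>/2)\<^sup>2"] by (simp add: power_divide)
    moreover have "\<epsilon>\<^sup>2 > 0" using \<epsilon> by simp
    ultimately have "infsum (\<lambda>a. (cmod (?T w a))\<^sup>2) P < \<epsilon>\<^sup>2" by linarith
    moreover have "?T x a - ?T g a = ?T w a" for a unfolding w_def by (simp add: graded_op_diff)
    ultimately have "norm2 P (\<lambda>a. ?T x a - ?T g a) < sqrt (\<epsilon>\<^sup>2)"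
      unfolding norm2_def by (simp only:) (rule real_sqrt_less_mono)
    then have "norm2 P (\<lambda>a. ?T x a - ?T g a) < \<epsilon>" using \<epsilon> by simp
    then show "\<exists>y\<in>?T ` G. norm2 P (\<lambda>a. ?T x a - y a) < \<epsilon>" using g(1) by blast
  qed
qed

lemma compact_op_separated_family_finite:
  fixes x :: "'j \<Rightarrow> 'a \<Rightarrow> complex" and B :: "'j \<Rightarrow> 'a set"
  assumes cpt: "compact_op P T" and \<delta>: "\<delta> > 0"
    and x: "\<And>j. j \<in> J \<Longrightarrow> x j \<in> ell2 P \<and> norm2 P (x j) \<le> 1 \<and> T (x j) \<in> ell2 P"
    and B: "\<And>j. j \<in> J \<Longrightarrow> finite (B j) \<and> B j \<subseteq> P"
    and big: "\<And>j. j \<in> J \<Longrightarrow> sqnorm (B j) (T (x j)) > \<delta>\<^sup>2"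
    and sep: "\<And>j j' a. j \<in> J \<Longrightarrow> j' \<in> J \<Longrightarrow> j \<noteq> j' \<Longrightarrow> a \<in> B j' \<Longrightarrow> T (x j) a = 0"
  shows "finite J"
proof (rule ccontr)
  assume infinite: "infinite J"
  obtain F where F: "finite F" "F \<subseteq> ell2 P"
    "\<And>z. z \<in> ell2 P \<Longrightarrow> norm2 P z \<le> 1 \<Longrightarrow> \<exists>y\<in>F. norm2 P (\<lambda>a. T z a - y a) < \<delta>/2"
    using cpt[unfolded compact_op_def, rule_format, of "\<delta>/2"] \<delta> by auto
  have "\<forall>j\<in>J. \<exists>y. y \<in> F \<and> norm2 P (\<lambda>a. T (x j) a - y a) < \<delta>/2"
    using F(3) x by blast
  from bchoice[OF this] obtain Y where Y: "\<forall>j\<in>J. Y j \<in> F \<and> norm2 P (\<lambda>a. T (x j) a - Y j a) < \<delta>/2"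
    by blast
  have "\<not> inj_on Y J"
    using infinite F(1) Y inj_on_finite[of Y J F] by blast
  then obtain j j' where jj: "j \<in> J" "j' \<in> J" "j \<noteq> j'" "Y j = Y j'"
    unfolding inj_on_def by blast
  define y where "y = Y j"
  have close: "sqrt (sqnorm (B j') (\<lambda>a. T (x k) a - y a)) < \<delta>/2" if k: "k \<in> J" "Y k = y" for k
  proof -
    have "(\<lambda>a. T (x k) a - y a) \<in> ell2 P"
      using x[OF k(1)] Y k(1) F(2) k(2) by (auto intro: ell2_diff)
    then have "sqrt (sqnorm (B j') (\<lambda>a. T (x k) a - y a)) \<le> norm2 P (\<lambda>a. T (x k) a - y a)"
      unfolding norm2_def using B[OF jj(2)] by (intro real_sqrt_le_mono sqnorm_le_ell2_infsum) auto
    moreover have "norm2 P (\<lambda>a. T (x k) a - y a) < \<delta>/2" using Y k by blast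
    ultimately show ?thesis by linarith
  qed
  have "sqnorm (B j') (\<lambda>a. T (x j) a - y a) = sqnorm (B j') (\<lambda>a. - y a)"
    using sep[OF jj(1-3)] by (intro sqnorm_cong) simp
  then have y_small: "sqrt (sqnorm (B j') y) < \<delta>/2" using close[OF jj(1)] y_def by simp
  have "sqrt (sqnorm (B j') (T (x j')))
      \<le> sqrt (sqnorm (B j') (\<lambda>a. T (x j') a - y a)) + sqrt (sqnorm (B j') y)"
    using sqrt_sqnorm_add_le[of "B j'" "\<lambda>a. T (x j') a - y a" y] by simp
  also have "\<dots> < \<delta>" using close[OF jj(2)] jj(4) y_small y_def by simp
  finally have "(sqrt (sqnorm (B j') (T (x j'))))\<^sup>2 < \<delta>\<^sup>2"
    by (intro power_strict_mono) (auto simp: sqnorm_nonneg)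
  then have "sqnorm (B j') (T (x j')) < \<delta>\<^sup>2" by (simp add: sqnorm_nonneg)
  then show False using big[OF jj(2)] by simp
qed

lemma graded_op_vanishes_off_level:
  assumes inj: "inj_on \<sigma> {m0..}" and m: "m \<ge> m0"
    and x: "\<And>a. a \<notin> level P lvl (\<sigma> m) \<Longrightarrow> x a = 0" and \<gamma>: "\<gamma> \<notin> level P lvl m"
  shows "graded_op P lvl \<sigma> m0 K x \<gamma> = 0"
proof (cases "\<gamma> \<in> P \<and> lvl \<gamma> \<ge> m0")
  case True
  then have "\<sigma> (lvl \<gamma>) \<noteq> \<sigma> m" using \<gamma> m inj by (auto simp: level_def dest: inj_onD)
  then show ?thesis using x by (auto simp: graded_op_def level_def intro!: sum.neutral)
qed (auto simp: graded_op_def)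

lemma graded_op_normalized_witness:
  assumes fin: "finite (level P lvl (\<sigma> m))"
    and big: "sqnorm (level P lvl m) (graded_op P lvl \<sigma> m0 K x) > \<delta>\<^sup>2 * sqnorm (level P lvl (\<sigma> m)) x"
  shows "\<exists>x'. (\<forall>a. a \<notin> level P lvl (\<sigma> m) \<longrightarrow> x' a = 0)
    \<and> sqnorm (level P lvl (\<sigma> m)) x' = 1
    \<and> sqnorm (level P lvl m) (graded_op P lvl \<sigma> m0 K x') > \<delta>\<^sup>2"
proof -
  let ?T = "graded_op P lvl \<sigma> m0 K" and ?L = "level P lvl (\<sigma> m)"
  define n where "n = sqnorm ?L x"
  have T_zero: "sqnorm (level P lvl m) (?T x) = 0" if "\<And>a. a \<in> ?L \<Longrightarrow> x a = 0"
  proof -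
    have "sqnorm (level P lvl m) (?T x) = sqnorm (level P lvl m) (?T (\<lambda>_. 0))"
      using that by (intro sqnorm_cong graded_op_cong) auto
    also have "\<dots> = 0" by (simp add: graded_op_def sqnorm_def cong: if_cong)
    finally show ?thesis .
  qed
  have n: "n > 0"
  proof (rule ccontr)
    assume "\<not> n > 0"
    then have "n = 0" using sqnorm_nonneg[of ?L x] by (simp add: n_def)
    then have "x a = 0" if "a \<in> ?L" for a
      using fin that sum_nonneg_eq_0_iff[of ?L "\<lambda>a. (cmod (x a))\<^sup>2"] by (simp add: n_def sqnorm_def)
    then show False using big T_zero \<open>n = 0\<close> by (simp add: n_def)
  qed
  define x' where "x' a = (if a \<in> ?L then x a / sqrt n else 0)" for a
  have "sqnorm ?L x' = 1" and "sqnorm (level P lvl m) (?T x') > \<delta>\<^sup>2"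
  proof -
    have "sqnorm ?L x' = sqnorm ?L (\<lambda>a. x a / sqrt n)" by (intro sqnorm_cong) (simp add: x'_def)
    also have "\<dots> = sqnorm ?L x / n" by (rule sqnorm_scaled[OF n])
    finally show "sqnorm ?L x' = 1" using n by (simp add: n_def)
    have "?T x' \<gamma> = ?T x \<gamma> / sqrt n" if "\<gamma> \<in> level P lvl m" for \<gamma>
    proof -
      have "?T x' \<gamma> = ?T (\<lambda>a. x a / sqrt n) \<gamma>" using that by (intro graded_op_cong) (auto simp: x'_def)
      then show ?thesis by (simp add: graded_op_def sum_divide_distrib)
    qed
    then have "sqnorm (level P lvl m) (?T x') = sqnorm (level P lvl m) (\<lambda>\<gamma>. ?T x \<gamma> / sqrt n)"
      by (rule sqnorm_cong)
    also have "\<dots> = sqnorm (level P lvl m) (?T x) / n" by (rule sqnorm_scaled[OF n])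
    finally have "sqnorm (level P lvl m) (?T x') = sqnorm (level P lvl m) (?T x) / n" .
    then show "sqnorm (level P lvl m) (?T x') > \<delta>\<^sup>2" using big n by (simp add: n_def pos_less_divide_eq)
  qed
  moreover have "\<forall>a. a \<notin> ?L \<longrightarrow> x' a = 0" by (simp add: x'_def)
  ultimately show ?thesis by blast
qed

text \<open>Normalized vectors on which infinitely many blocks were large would be mapped to a
  separated family, which is impossible for a compact operator.\<close>
lemma graded_op_eventually_small:
  assumes fin: "\<And>m. finite (level P lvl m)" and inj: "inj_on \<sigma> {m0..}"
    and cpt: "compact_op P (graded_op P lvl \<sigma> m0 K)" and \<delta>: "\<delta> > 0"
  shows "\<exists>N. \<forall>m\<ge>N. \<forall>x. sqnorm (level P lvl m) (graded_op P lvl \<sigma> m0 K x)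
      \<le> \<delta>\<^sup>2 * sqnorm (level P lvl (\<sigma> m)) x"
proof -
  let ?T = "graded_op P lvl \<sigma> m0 K"
  define J where "J = {m. m \<ge> m0 \<and> (\<exists>x. sqnorm (level P lvl m) (?T x) > \<delta>\<^sup>2 * sqnorm (level P lvl (\<sigma> m)) x)}"
  have "\<forall>m\<in>J. \<exists>x'. (\<forall>a. a \<notin> level P lvl (\<sigma> m) \<longrightarrow> x' a = 0)
      \<and> sqnorm (level P lvl (\<sigma> m)) x' = 1 \<and> sqnorm (level P lvl m) (?T x') > \<delta>\<^sup>2"
    using graded_op_normalized_witness[OF fin] by (auto simp: J_def)
  from bchoice[OF this] obtain X where X: "\<forall>m\<in>J. (\<forall>a. a \<notin> level P lvl (\<sigma> m) \<longrightarrow> X m a = 0)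
      \<and> sqnorm (level P lvl (\<sigma> m)) (X m) = 1 \<and> sqnorm (level P lvl m) (?T (X m)) > \<delta>\<^sup>2"
    by blast
  have J_m0: "m \<ge> m0" if "m \<in> J" for m using that by (simp add: J_def)
  have TX: "?T (X m) \<gamma> = 0" if "m \<in> J" "\<gamma> \<notin> level P lvl m" for m \<gamma>
    using X that(1) by (intro graded_op_vanishes_off_level[OF inj J_m0[OF that(1)] _ that(2)]) auto
  have "finite J"
  proof (rule compact_op_separated_family_finite[OF cpt \<delta>, where J=J and x=X and B="level P lvl"])
    fix m assume m: "m \<in> J"
    have Xm: "\<And>a. a \<notin> level P lvl (\<sigma> m) \<Longrightarrow> X m a = 0" "sqnorm (level P lvl (\<sigma> m)) (X m) = 1"
      "sqnorm (level P lvl m) (?T (X m)) > \<delta>\<^sup>2"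
      using X m by auto
    have "norm2 P (X m) = 1"
      using ell2_finite_support(2)[OF fin level_subset Xm(1)] Xm(2) by (simp add: norm2_def)
    moreover have "X m \<in> ell2 P" by (rule ell2_finite_support(1)[OF fin level_subset Xm(1)])
    moreover have "?T (X m) \<in> ell2 P" by (rule ell2_finite_support(1)[OF fin level_subset TX[OF m]])
    ultimately show "X m \<in> ell2 P \<and> norm2 P (X m) \<le> 1 \<and> ?T (X m) \<in> ell2 P" by simp
    show "finite (level P lvl m) \<and> level P lvl m \<subseteq> P" by (simp add: fin level_subset)
    show "sqnorm (level P lvl m) (?T (X m)) > \<delta>\<^sup>2" by (rule Xm(3))
  next
    fix m m' a assume "m \<in> J" "m' \<in> J" "m \<noteq> m'" "a \<in> level P lvl m'"
    then show "?T (X m) a = 0" using TX[of m a] by (auto simp: level_def)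
  qed
  then obtain N where N: "J \<subseteq> {..<N}" using finite_nat_bounded by blast
  have "sqnorm (level P lvl m) (?T x) \<le> \<delta>\<^sup>2 * sqnorm (level P lvl (\<sigma> m)) x"
    if "m \<ge> max N m0" for m x
  proof -
    have "m \<notin> J" using that N by auto
    then show ?thesis using that by (auto simp: J_def not_less)
  qed
  then show ?thesis by blast
qed

section \<open>Norms of finite matrices\<close>

lemma norm2_finite: "finite S \<Longrightarrow> norm2 S x = sqrt (sqnorm S x)"
  by (simp add: norm2_def sqnorm_def)

lemma ell2_finite_iff: "finite S \<Longrightarrow> x \<in> ell2 S \<longleftrightarrow> (\<forall>a. a \<notin> S \<longrightarrow> x a = 0)"
  by (auto simp: ell2_def)

lemma matop_norm_bdd_above:
  assumes S: "finite S"
  shows "bdd_above ((\<lambda>x. norm2 S (matop S M x)) ` {x \<in> ell2 S. norm2 S x \<le> 1})"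
proof (rule bdd_aboveI2)
  fix x assume "x \<in> {x \<in> ell2 S. norm2 S x \<le> 1}"
  then have x1: "sqnorm S x \<le> 1" using S by (simp add: norm2_finite)
  have entry: "cmod (x b) \<le> 1" if "b \<in> S" for b
  proof -
    have "(cmod (x b))\<^sup>2 \<le> sqnorm S x" unfolding sqnorm_def by (rule member_le_sum) (use S that in auto)
    then have "(cmod (x b))\<^sup>2 \<le> 1" using x1 by linarith
    then show ?thesis by (simp add: abs_square_le_1)
  qed
  define R where "R a = (\<Sum>b\<in>S. cmod (M a b))" for a
  have "sqnorm S (matop S M x) \<le> (\<Sum>a\<in>S. (R a)\<^sup>2)"
    unfolding sqnorm_def
  proof (rule sum_mono)
    fix a assume a: "a \<in> S"
    have "cmod (matop S M x a) \<le> (\<Sum>b\<in>S. cmod (M a b * x b))"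
      using a by (simp add: matop_def norm_sum)
    also have "\<dots> \<le> R a"
      unfolding R_def using entry by (intro sum_mono) (simp add: norm_mult mult_left_le)
    finally show "(cmod (matop S M x a))\<^sup>2 \<le> (R a)\<^sup>2" by (intro power_mono) auto
  qed
  then show "norm2 S (matop S M x) \<le> sqrt (\<Sum>a\<in>S. (R a)\<^sup>2)"
    using S by (simp add: norm2_finite)
qed

lemma zero_in_unit_ball: "finite S \<Longrightarrow> (\<lambda>_. 0) \<in> {x \<in> ell2 S. norm2 S x \<le> 1}"
  by (simp add: ell2_finite_iff norm2_finite sqnorm_def)

lemma fin_opnorm_nonneg:
  assumes S: "finite S"
  shows "fin_opnorm S M \<ge> 0"
proof -
  have "norm2 S (matop S M (\<lambda>_. 0)) \<le> fin_opnorm S M"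
    unfolding fin_opnorm_def
    by (rule cSup_upper[OF imageI[OF zero_in_unit_ball[OF S]] matop_norm_bdd_above[OF S]])
  moreover have "norm2 S (matop S M (\<lambda>_. 0)) = 0"
    using S by (simp add: norm2_finite sqnorm_def matop_def)
  ultimately show ?thesis by simp
qed

lemma sqnorm_matop_le:
  assumes S: "finite S"
  shows "sqnorm S (matop S M x) \<le> (fin_opnorm S M)\<^sup>2 * sqnorm S x"
proof (cases "sqnorm S x = 0")
  case True
  then have "\<forall>a\<in>S. x a = 0"
    using S sum_nonneg_eq_0_iff[of S "\<lambda>a. (cmod (x a))\<^sup>2"] by (simp add: sqnorm_def)
  then have "matop S M x = (\<lambda>_. 0)" by (auto simp: matop_def intro!: sum.neutral)
  then show ?thesis using True by (simp add: sqnorm_def)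
next
  case False
  define t where "t = sqnorm S x"
  have t: "t > 0" using False sqnorm_nonneg[of S x] by (simp add: t_def)
  define z where "z a = (if a \<in> S then x a / sqrt t else 0)" for a
  have "sqnorm S z = sqnorm S (\<lambda>a. x a / sqrt t)" by (intro sqnorm_cong) (simp add: z_def)
  then have "sqnorm S z = 1" using t by (simp add: sqnorm_scaled t_def)
  then have "z \<in> {x \<in> ell2 S. norm2 S x \<le> 1}" using S by (simp add: ell2_finite_iff norm2_finite z_def)
  then have le: "norm2 S (matop S M z) \<le> fin_opnorm S M"
    unfolding fin_opnorm_def by (rule cSup_upper[OF imageI matop_norm_bdd_above[OF S]])
  have "matop S M z = (\<lambda>a. matop S M x a / sqrt t)"
    unfolding matop_def z_def by (auto simp: sum_divide_distrib intro!: sum.cong)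
  then have "sqnorm S (matop S M z) = sqnorm S (matop S M x) / t" using t by (simp add: sqnorm_scaled)
  then have "sqrt (sqnorm S (matop S M x) / t) \<le> fin_opnorm S M" using le S by (simp add: norm2_finite)
  then have "sqnorm S (matop S M x) / t \<le> (fin_opnorm S M)\<^sup>2"
    using fin_opnorm_nonneg[OF S] real_sqrt_le_iff[of _ "(fin_opnorm S M)\<^sup>2"] by simp
  then show ?thesis using t by (simp add: t_def pos_divide_le_eq)
qed

lemma fin_opnorm_le:
  assumes S: "finite S" and c: "c \<ge> 0" and bound: "\<And>x. sqnorm S (matop S M x) \<le> c\<^sup>2 * sqnorm S x"
  shows "fin_opnorm S M \<le> c"
  unfolding fin_opnorm_def
proof (rule cSup_least)
  show "(\<lambda>x. norm2 S (matop S M x)) ` {x \<in> ell2 S. norm2 S x \<le> 1} \<noteq> {}"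
    using zero_in_unit_ball[OF S] by blast
next
  fix v assume "v \<in> (\<lambda>x. norm2 S (matop S M x)) ` {x \<in> ell2 S. norm2 S x \<le> 1}"
  then obtain x where x: "norm2 S x \<le> 1" "v = norm2 S (matop S M x)" by auto
  have "v \<le> sqrt (c\<^sup>2 * sqnorm S x)" using x S bound by (simp add: norm2_finite)
  also have "\<dots> \<le> sqrt (c\<^sup>2 * 1)"
    using x S by (intro real_sqrt_le_mono mult_left_mono) (auto simp: norm2_finite)
  finally show "v \<le> c" using c by simp
qed

section \<open>Paths and the operators \<open>S\<^sub>\<alpha>\<close> and \<open>S\<^sub>\<alpha>\<^sup>*\<close>\<close>

definition prepend :: "'e list \<Rightarrow> ('v,'e) gpath \<Rightarrow> ('v,'e) gpath" where
  "prepend es b = (fst b, es @ snd b)"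

definition pdrop :: "nat \<Rightarrow> ('v,'e) gpath \<Rightarrow> ('v,'e) gpath" where
  "pdrop p \<gamma> = (fst \<gamma>, drop p (snd \<gamma>))"

definition Spath_adj :: "('e \<Rightarrow> 'v) \<Rightarrow> ('e \<Rightarrow> 'v) \<Rightarrow> 'e list
    \<Rightarrow> (('v,'e) gpath \<Rightarrow> complex) \<Rightarrow> (('v,'e) gpath \<Rightarrow> complex)" where
  "Spath_adj s r es y = (\<lambda>\<beta>. if \<beta> \<in> fock_paths s r \<and> prepend es \<beta> \<in> fock_paths s r
     then y (prepend es \<beta>) else 0)"

lemma is_path_iff_successively:
  "is_path s r (v, es) \<longleftrightarrow> es = [] \<or> (v = s (last es) \<and> successively (\<lambda>a b. s a = r b) es)"
  unfolding is_path_def successively_conv_nth by auto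

lemma is_path_prepend:
  assumes "es \<noteq> []"
  shows "is_path s r (prepend es b) \<longleftrightarrow>
     successively (\<lambda>a b. s a = r b) es \<and> is_path s r b \<and> prange r b = s (last es)"
proof -
  obtain w bs where b: "b = (w, bs)" by (cases b)
  show ?thesis
  proof (cases "bs = []")
    case True
    then show ?thesis using assms by (auto simp: b prepend_def is_path_iff_successively prange_def)
  next
    case False
    then show ?thesis using assms
      by (auto simp: b prepend_def is_path_iff_successively prange_def successively_append_iff)
  qed
qed

lemma is_path_appendD:
  assumes "is_path s r (v, xs @ ys)"
  shows "is_path s r (v, ys)"
proof (cases "ys = []")
  case True then show ?thesis by (simp add: is_path_iff_successively)
next
  case False
  then show ?thesis using assms by (auto simp: is_path_iff_successively successively_append_iff)
qed

lemma pdrop_in_fock_paths: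
  assumes "\<gamma> \<in> fock_paths s r"
  shows "pdrop p \<gamma> \<in> fock_paths s r"
proof -
  obtain v xs where g: "\<gamma> = (v, xs)" by (cases \<gamma>)
  have "is_path s r (v, take p xs @ drop p xs)" using assms g by (simp add: fock_paths_def)
  then have "is_path s r (v, drop p xs)" by (rule is_path_appendD)
  then show ?thesis by (simp add: g pdrop_def fock_paths_def)
qed

lemma prepend_pdrop: "take (length es) (snd \<gamma>) = es \<Longrightarrow> prepend es (pdrop (length es) \<gamma>) = \<gamma>"
proof -
  assume h: "take (length es) (snd \<gamma>) = es"
  have "es @ drop (length es) (snd \<gamma>) = snd \<gamma>" using append_take_drop_id[of "length es" "snd \<gamma>"] h by simp
  then show ?thesis unfolding prepend_def pdrop_def by simp
qed

lemma pdrop_prepend: "pdrop (length es) (prepend es b) = b"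
  unfolding prepend_def pdrop_def by simp

lemma Spath_apply:
  assumes "es \<noteq> []"
  shows "Spath s r es x \<gamma> = (if \<gamma> \<in> fock_paths s r \<and> take (length es) (snd \<gamma>) = es
           then x (pdrop (length es) \<gamma>) else 0)"
  using assms
proof (induction es arbitrary: \<gamma> rule: list_nonempty_induct)
  case (single e)
  obtain v xs where g: "\<gamma> = (v, xs)" by (cases \<gamma>)
  show ?case
    by (cases xs) (auto simp: Spath_def Sedge_def g pdrop_def)
next
  case (cons e es)
  obtain v xs where g: "\<gamma> = (v, xs)" by (cases \<gamma>)
  have sp: "Spath s r (e # es) x = Sedge s r e (Spath s r es x)"
    by (simp add: Spath_def)
  show ?case
  proof (cases xs)
    case Nil
    then show ?thesis by (simp add: sp Sedge_def g)
  next
    case (Cons e' rest)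
    have "is_path s r (v, [e'] @ rest) \<Longrightarrow> is_path s r (v, rest)" by (rule is_path_appendD)
    then have suf: "\<gamma> \<in> fock_paths s r \<Longrightarrow> (v, rest) \<in> fock_paths s r"
      by (simp add: g Cons fock_paths_def)
    show ?thesis
      using suf by (auto simp: sp Sedge_def g Cons cons.IH pdrop_def)
  qed
qed

definition extendable :: "('e \<Rightarrow> 'v) \<Rightarrow> ('e \<Rightarrow> 'v) \<Rightarrow> 'e list \<Rightarrow> nat \<Rightarrow> ('v,'e) gpath set" where
  "extendable s r es k = {b \<in> paths_len s r k. prepend es b \<in> fock_paths s r}"

definition with_prefix :: "('e \<Rightarrow> 'v) \<Rightarrow> ('e \<Rightarrow> 'v) \<Rightarrow> 'e list \<Rightarrow> nat \<Rightarrow> ('v,'e) gpath set" where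
  "with_prefix s r es k = {\<gamma> \<in> paths_len s r (k + length es). take (length es) (snd \<gamma>) = es}"

lemma level_length_eq_paths_len: "level (fock_paths s r) (\<lambda>a. length (snd a)) m = paths_len s r m"
  by (simp add: level_def paths_len_def)

lemma finite_paths_len: "finite (paths_len (s :: 'e::finite \<Rightarrow> 'v::finite) r m)"
proof -
  have "paths_len s r m \<subseteq> UNIV \<times> {xs :: 'e list. set xs \<subseteq> UNIV \<and> length xs = m}"
    by (auto simp: paths_len_def)
  moreover have "finite ((UNIV :: 'v set) \<times> {xs :: 'e list. set xs \<subseteq> UNIV \<and> length xs = m})"
    by (intro finite_cartesian_product finite_lists_length_eq) auto
  ultimately show ?thesis by (rule finite_subset)
qed

lemma bij_betw_prepend: "bij_betw (prepend es) (extendable s r es k) (with_prefix s r es k)"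
proof (rule bij_betw_byWitness[where f'="pdrop (length es)"])
  show "\<forall>a\<in>extendable s r es k. pdrop (length es) (prepend es a) = a" by (simp add: pdrop_prepend)
  show "\<forall>a'\<in>with_prefix s r es k. prepend es (pdrop (length es) a') = a'" by (simp add: with_prefix_def prepend_pdrop)
  show "prepend es ` extendable s r es k \<subseteq> with_prefix s r es k"
    by (auto simp: extendable_def with_prefix_def paths_len_def prepend_def)
  show "pdrop (length es) ` with_prefix s r es k \<subseteq> extendable s r es k"
  proof
    fix b assume "b \<in> pdrop (length es) ` with_prefix s r es k"
    then obtain \<gamma> where g: "\<gamma> \<in> with_prefix s r es k" "b = pdrop (length es) \<gamma>" by auto
    have "b \<in> fock_paths s r" using g by (auto simp: with_prefix_def paths_len_def intro!: pdrop_in_fock_paths)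
    moreover have "length (snd b) = k" using g by (auto simp: with_prefix_def paths_len_def pdrop_def)
    moreover have "prepend es b \<in> fock_paths s r" using g prepend_pdrop[of es \<gamma>] by (auto simp: with_prefix_def paths_len_def)
    ultimately show "b \<in> extendable s r es k" by (simp add: extendable_def paths_len_def)
  qed
qed

lemma sum_with_prefix: "(\<Sum>\<gamma>\<in>with_prefix s r es k. g \<gamma>) = (\<Sum>b\<in>extendable s r es k. g (prepend es b))"
  using sum.reindex_bij_betw[OF bij_betw_prepend, of g] by simp

lemma extendable_subset: "extendable s r es k \<subseteq> paths_len s r k" by (auto simp: extendable_def)
lemma with_prefix_subset: "with_prefix s r es k \<subseteq> paths_len s r (k + length es)" by (auto simp: with_prefix_def)

lemma prepend_in_fock_paths_cong:
  assumes "es \<noteq> []" "b \<in> fock_paths s r" "b' \<in> fock_paths s r" "prange r b = prange r b'"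
    "prepend es b \<in> fock_paths s r"
  shows "prepend es b' \<in> fock_paths s r"
  using assms is_path_prepend[OF assms(1), of s r b] is_path_prepend[OF assms(1), of s r b'] by (auto simp: fock_paths_def)

lemma Spath_apply_paths_len:
  assumes "es \<noteq> []" "\<gamma> \<in> paths_len s r (k + length es)"
  shows "Spath s r es x \<gamma> = (if \<gamma> \<in> with_prefix s r es k then x (pdrop (length es) \<gamma>) else 0)"
  using assms by (simp add: Spath_apply with_prefix_def paths_len_def)

lemma weight_seq_support:
  assumes "weight_seq s r Zm" "Zm k a b \<noteq> 0"
  shows "a \<in> paths_len s r k \<and> b \<in> paths_len s r k \<and> prange r a = prange r b"
  using assms unfolding weight_seq_def by blast

text \<open>Each \<open>Z\<^sub>k\<close> commutes with the left action of \<open>C(E\<^sup>0)\<close>, so it only couples paths with the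
  same range; hence it cannot leave the paths that can be prolonged by \<open>es\<close>.\<close>
lemma weight_seq_prepend_iff:
  assumes ws: "weight_seq s r Zm" and es: "es \<noteq> []" and Z: "Zm k \<beta> b \<noteq> 0"
  shows "prepend es \<beta> \<in> fock_paths s r \<longleftrightarrow> prepend es b \<in> fock_paths s r"
proof -
  have "\<beta> \<in> fock_paths s r" "b \<in> fock_paths s r" "prange r \<beta> = prange r b"
    using weight_seq_support[OF ws Z] by (auto simp: paths_len_def)
  then show ?thesis using prepend_in_fock_paths_cong[OF es] by metis
qed

lemma sqnorm_Spath_le:
  assumes "es \<noteq> []" "finite (paths_len s r k)" "finite (paths_len s r (k + length es))"
  shows "sqnorm (paths_len s r (k + length es)) (Spath s r es x) \<le> sqnorm (paths_len s r k) x"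
proof -
  have "sqnorm (paths_len s r (k + length es)) (Spath s r es x)
      = (\<Sum>\<gamma>\<in>with_prefix s r es k. (cmod (x (pdrop (length es) \<gamma>)))\<^sup>2)"
    unfolding sqnorm_def
  proof (rule sum.mono_neutral_cong_right)
    show "finite (paths_len s r (k + length es))" by (rule assms(3))
    show "with_prefix s r es k \<subseteq> paths_len s r (k + length es)" by (rule with_prefix_subset)
    show "\<forall>i\<in>paths_len s r (k + length es) - with_prefix s r es k. (cmod (Spath s r es x i))\<^sup>2 = 0"
      using assms by (auto simp: Spath_apply_paths_len)
    show "\<And>i. i \<in> with_prefix s r es k \<Longrightarrow> (cmod (Spath s r es x i))\<^sup>2 = (cmod (x (pdrop (length es) i)))\<^sup>2"
      using assms with_prefix_subset[of s r es k] by (auto simp: Spath_apply_paths_len)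
  qed
  also have "\<dots> = (\<Sum>b\<in>extendable s r es k. (cmod (x b))\<^sup>2)"
    by (simp add: sum_with_prefix pdrop_prepend)
  also have "\<dots> \<le> sqnorm (paths_len s r k) x"
    unfolding sqnorm_def by (rule sum_mono2) (use assms extendable_subset[of s r es k] in auto)
  finally show ?thesis .
qed

lemma sqnorm_Spath_adj_le:
  assumes "finite (paths_len s r k)" "finite (paths_len s r (k + length es))"
  shows "sqnorm (paths_len s r k) (Spath_adj s r es y) \<le> sqnorm (paths_len s r (k + length es)) y"
proof -
  have "sqnorm (paths_len s r k) (Spath_adj s r es y) = (\<Sum>b\<in>extendable s r es k. (cmod (y (prepend es b)))\<^sup>2)"
    unfolding sqnorm_def
  proof (rule sum.mono_neutral_cong_right)
    show "finite (paths_len s r k)" by (rule assms(1))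
    show "extendable s r es k \<subseteq> paths_len s r k" by (rule extendable_subset)
    show "\<forall>i\<in>paths_len s r k - extendable s r es k. (cmod (Spath_adj s r es y i))\<^sup>2 = 0"
      by (auto simp: Spath_adj_def extendable_def)
    show "\<And>i. i \<in> extendable s r es k \<Longrightarrow> (cmod (Spath_adj s r es y i))\<^sup>2 = (cmod (y (prepend es i)))\<^sup>2"
      by (auto simp: Spath_adj_def extendable_def paths_len_def)
  qed
  also have "\<dots> = (\<Sum>\<gamma>\<in>with_prefix s r es k. (cmod (y \<gamma>))\<^sup>2)"
    by (simp add: sum_with_prefix)
  also have "\<dots> \<le> sqnorm (paths_len s r (k + length es)) y"
    unfolding sqnorm_def by (rule sum_mono2) (use assms with_prefix_subset[of s r es k] in auto)
  finally show ?thesis .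
qed

section \<open>The commutators of \<open>S\<^sub>\<alpha>\<close> and \<open>S\<^sub>\<alpha>\<^sup>*\<close> with \<open>Z\<close>\<close>

definition tensor_defect :: "('e \<Rightarrow> 'v) \<Rightarrow> ('e \<Rightarrow> 'v) \<Rightarrow> nat
    \<Rightarrow> (nat \<Rightarrow> ('v,'e) gpath \<Rightarrow> ('v,'e) gpath \<Rightarrow> complex) \<Rightarrow> nat \<Rightarrow> ('v,'e) gpath \<Rightarrow> ('v,'e) gpath \<Rightarrow> complex" where
  "tensor_defect s r p Zm k = (\<lambda>a b. tensorI s r p Zm k a b - Zm (k + p) a b)"

definition Spath_comm_kernel :: "('e \<Rightarrow> 'v) \<Rightarrow> ('e \<Rightarrow> 'v)
    \<Rightarrow> (nat \<Rightarrow> ('v,'e) gpath \<Rightarrow> ('v,'e) gpath \<Rightarrow> complex) \<Rightarrow> 'e list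
    \<Rightarrow> ('v,'e) gpath \<Rightarrow> ('v,'e) gpath \<Rightarrow> complex" where
  "Spath_comm_kernel s r Zm es \<gamma> b = (if prepend es b \<in> fock_paths s r
     then tensor_defect s r (length es) Zm (length (snd \<gamma>) - length es) \<gamma> (prepend es b) else 0)"

definition Spath_adj_comm_kernel :: "('e \<Rightarrow> 'v) \<Rightarrow> ('e \<Rightarrow> 'v)
    \<Rightarrow> (nat \<Rightarrow> ('v,'e) gpath \<Rightarrow> ('v,'e) gpath \<Rightarrow> complex) \<Rightarrow> 'e list
    \<Rightarrow> ('v,'e) gpath \<Rightarrow> ('v,'e) gpath \<Rightarrow> complex" where
  "Spath_adj_comm_kernel s r Zm es \<beta> b = - (if prepend es \<beta> \<in> fock_paths s r
     then tensor_defect s r (length es) Zm (length (snd \<beta>)) (prepend es \<beta>) b else 0)"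

lemma tensorI_pdrop: "tensorI s r p Zm k a b =
  (if a \<in> paths_len s r (k + p) \<and> b \<in> paths_len s r (k + p) \<and> take p (snd a) = take p (snd b)
   then Zm k (pdrop p a) (pdrop p b) else 0)"
  by (simp add: tensorI_def pdrop_def)

lemma pdrop_paths_len: "\<gamma> \<in> paths_len s r (k + p) \<Longrightarrow> pdrop p \<gamma> \<in> paths_len s r k"
  by (auto simp: paths_len_def pdrop_def intro: pdrop_in_fock_paths[unfolded pdrop_def])

lemma Zop_apply: "\<gamma> \<in> paths_len s r k \<Longrightarrow>
    Zop s r Zm x \<gamma> = (\<Sum>\<beta>\<in>paths_len s r k. Zm k \<gamma> \<beta> * x \<beta>)"
  by (simp add: Zop_def paths_len_def)

lemma sum_tensorI_Spath:
  assumes ws: "weight_seq s r Zm" and es: "es \<noteq> []" and p: "p = length es"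
    and g: "\<gamma> \<in> paths_len s r (k + p)"
    and fin: "finite (paths_len s r (k + p))" "finite (paths_len s r k)"
  shows "(\<Sum>\<beta>'\<in>paths_len s r (k + p). tensorI s r p Zm k \<gamma> \<beta>' * Spath s r es x \<beta>')
       = (if take p (snd \<gamma>) = es then (\<Sum>\<beta>\<in>paths_len s r k. Zm k (pdrop p \<gamma>) \<beta> * x \<beta>) else 0)"
proof (cases "take p (snd \<gamma>) = es")
  case False
  have "tensorI s r p Zm k \<gamma> \<beta>' * Spath s r es x \<beta>' = 0" if "\<beta>' \<in> paths_len s r (k + p)" for \<beta>'
    using that False p es by (auto simp: Spath_apply_paths_len tensorI_pdrop with_prefix_def)
  then have "(\<Sum>\<beta>'\<in>paths_len s r (k + p). tensorI s r p Zm k \<gamma> \<beta>' * Spath s r es x \<beta>') = 0"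
    by (intro sum.neutral ballI)
  then show ?thesis using False by simp
next
  case True
  have "(\<Sum>\<beta>'\<in>paths_len s r (k + p). tensorI s r p Zm k \<gamma> \<beta>' * Spath s r es x \<beta>')
      = (\<Sum>\<beta>'\<in>with_prefix s r es k. Zm k (pdrop p \<gamma>) (pdrop p \<beta>') * x (pdrop p \<beta>'))"
  proof (rule sum.mono_neutral_cong_right)
    show "finite (paths_len s r (k + p))" by (rule fin(1))
    show "with_prefix s r es k \<subseteq> paths_len s r (k + p)" using with_prefix_subset p by blast
    show "\<forall>i\<in>paths_len s r (k + p) - with_prefix s r es k. tensorI s r p Zm k \<gamma> i * Spath s r es x i = 0"
      using es p by (auto simp: Spath_apply_paths_len)
    show "tensorI s r p Zm k \<gamma> i * Spath s r es x i = Zm k (pdrop p \<gamma>) (pdrop p i) * x (pdrop p i)"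
      if "i \<in> with_prefix s r es k" for i
      using that es p g True by (auto simp: Spath_apply_paths_len tensorI_pdrop with_prefix_def)
  qed
  also have "\<dots> = (\<Sum>b\<in>extendable s r es k. Zm k (pdrop p \<gamma>) b * x b)"
    by (simp add: sum_with_prefix pdrop_prepend p)
  also have "\<dots> = (\<Sum>b\<in>paths_len s r k. Zm k (pdrop p \<gamma>) b * x b)"
  proof (rule sum.mono_neutral_left)
    show "finite (paths_len s r k)" by (rule fin(2))
    show "extendable s r es k \<subseteq> paths_len s r k" by (rule extendable_subset)
    have pre: "prepend es (pdrop p \<gamma>) \<in> fock_paths s r"
      using prepend_pdrop[of es \<gamma>] True p g by (simp add: paths_len_def)
    show "\<forall>b\<in>paths_len s r k - extendable s r es k. Zm k (pdrop p \<gamma>) b * x b = 0"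
    proof
      fix b assume "b \<in> paths_len s r k - extendable s r es k"
      then have "Zm k (pdrop p \<gamma>) b = 0"
        using weight_seq_prepend_iff[OF ws es, of k "pdrop p \<gamma>" b] pre by (auto simp: extendable_def)
      then show "Zm k (pdrop p \<gamma>) b * x b = 0" by simp
    qed
  qed
  finally show ?thesis using True by simp
qed

lemma Spath_Zop_comm_eq_defect:
  assumes ws: "weight_seq s r Zm" and es: "es \<noteq> []" and p: "p = length es"
    and g: "\<gamma> \<in> paths_len s r (k + p)"
    and fin: "finite (paths_len s r (k + p))" "finite (paths_len s r k)"
  shows "Spath s r es (Zop s r Zm x) \<gamma> - Zop s r Zm (Spath s r es x) \<gamma>
       = matop (paths_len s r (k + p)) (tensor_defect s r p Zm k) (Spath s r es x) \<gamma>"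
proof -
  have "Spath s r es (Zop s r Zm x) \<gamma>
      = (if take p (snd \<gamma>) = es then (\<Sum>\<beta>\<in>paths_len s r k. Zm k (pdrop p \<gamma>) \<beta> * x \<beta>) else 0)"
    using es p g Zop_apply[OF pdrop_paths_len[OF g], of Zm x] by (auto simp: Spath_apply_paths_len with_prefix_def)
  also have "\<dots> = (\<Sum>\<beta>'\<in>paths_len s r (k + p). tensorI s r p Zm k \<gamma> \<beta>' * Spath s r es x \<beta>')"
    by (rule sum_tensorI_Spath[OF ws es p g fin, symmetric])
  finally have S_Z: "Spath s r es (Zop s r Zm x) \<gamma> = \<dots>" .
  have Z_S: "Zop s r Zm (Spath s r es x) \<gamma> = (\<Sum>\<beta>'\<in>paths_len s r (k + p). Zm (k + p) \<gamma> \<beta>' * Spath s r es x \<beta>')"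
    by (rule Zop_apply[OF g])
  show ?thesis unfolding S_Z Z_S using g
    by (simp add: matop_def tensor_defect_def sum_subtractf left_diff_distrib)
qed

lemma matop_defect_Spath:
  assumes es: "es \<noteq> []" and p: "p = length es"
    and g: "\<gamma> \<in> paths_len s r (k + p)"
    and fin: "finite (paths_len s r (k + p))" "finite (paths_len s r k)"
  shows "matop (paths_len s r (k + p)) (tensor_defect s r p Zm k) (Spath s r es x) \<gamma>
       = (\<Sum>b\<in>paths_len s r k. Spath_comm_kernel s r Zm es \<gamma> b * x b)"
proof -
  have lg: "length (snd \<gamma>) - length es = k" using g p by (simp add: paths_len_def)
  have "matop (paths_len s r (k + p)) (tensor_defect s r p Zm k) (Spath s r es x) \<gamma>
      = (\<Sum>\<beta>'\<in>paths_len s r (k + p). tensor_defect s r p Zm k \<gamma> \<beta>' * Spath s r es x \<beta>')"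
    using g by (simp add: matop_def)
  also have "\<dots> = (\<Sum>\<beta>'\<in>with_prefix s r es k. tensor_defect s r p Zm k \<gamma> \<beta>' * x (pdrop p \<beta>'))"
  proof (rule sum.mono_neutral_cong_right)
    show "finite (paths_len s r (k + p))" by (rule fin(1))
    show "with_prefix s r es k \<subseteq> paths_len s r (k + p)" using with_prefix_subset p by blast
    show "\<forall>i\<in>paths_len s r (k + p) - with_prefix s r es k. tensor_defect s r p Zm k \<gamma> i * Spath s r es x i = 0"
      using es p by (auto simp: Spath_apply_paths_len)
    show "tensor_defect s r p Zm k \<gamma> i * Spath s r es x i = tensor_defect s r p Zm k \<gamma> i * x (pdrop p i)"
      if "i \<in> with_prefix s r es k" for i
      using that es p by (auto simp: Spath_apply_paths_len with_prefix_def)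
  qed
  also have "\<dots> = (\<Sum>b\<in>extendable s r es k. tensor_defect s r p Zm k \<gamma> (prepend es b) * x b)"
    by (simp add: sum_with_prefix pdrop_prepend p)
  also have "\<dots> = (\<Sum>b\<in>paths_len s r k. Spath_comm_kernel s r Zm es \<gamma> b * x b)"
  proof (rule sum.mono_neutral_cong_left)
    show "finite (paths_len s r k)" by (rule fin(2))
    show "extendable s r es k \<subseteq> paths_len s r k" by (rule extendable_subset)
    show "\<forall>i\<in>paths_len s r k - extendable s r es k. Spath_comm_kernel s r Zm es \<gamma> i * x i = 0"
      by (auto simp: Spath_comm_kernel_def extendable_def)
    show "tensor_defect s r p Zm k \<gamma> (prepend es b) * x b = Spath_comm_kernel s r Zm es \<gamma> b * x b" if "b \<in> extendable s r es k" for b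
      using that lg p by (auto simp: Spath_comm_kernel_def extendable_def)
  qed
  finally show ?thesis .
qed

lemma Spath_short:
  assumes "es \<noteq> []" "length (snd \<gamma>) < length es"
  shows "Spath s r es x \<gamma> = 0"
proof -
  have "take (length es) (snd \<gamma>) \<noteq> es"
  proof
    assume h: "take (length es) (snd \<gamma>) = es"
    have "length (take (length es) (snd \<gamma>)) < length es" using assms by simp
    then show False using h by simp
  qed
  then show ?thesis using assms by (simp add: Spath_apply)
qed

lemma Spath_Zop_comm_graded:
  fixes s r :: "'e::finite \<Rightarrow> 'v::finite"
  assumes ws: "weight_seq s r Zm" and es: "es \<noteq> []"
  shows "(\<lambda>x a. Spath s r es (Zop s r Zm x) a - Zop s r Zm (Spath s r es x) a)
       = graded_op (fock_paths s r) (\<lambda>a. length (snd a)) (\<lambda>m. m - length es) (length es) (Spath_comm_kernel s r Zm es)"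
proof (intro ext)
  fix x \<gamma>
  let ?p = "length es"
  show "Spath s r es (Zop s r Zm x) \<gamma> - Zop s r Zm (Spath s r es x) \<gamma>
      = graded_op (fock_paths s r) (\<lambda>a. length (snd a)) (\<lambda>m. m - ?p) ?p (Spath_comm_kernel s r Zm es) x \<gamma>"
  proof (cases "\<gamma> \<in> fock_paths s r")
    case False
    then show ?thesis using es by (simp add: Spath_apply Zop_def graded_op_def)
  next
    case inP: True
    show ?thesis
    proof (cases "length (snd \<gamma>) < ?p")
      case True
      have "Zop s r Zm (Spath s r es x) \<gamma> = 0"
        using True es by (auto simp: Zop_def paths_len_def Spath_short intro!: sum.neutral)
      then show ?thesis using True es by (simp add: Spath_short graded_op_def)
    next
      case False
      define k where "k = length (snd \<gamma>) - ?p"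
      have g: "\<gamma> \<in> paths_len s r (k + ?p)" using False inP by (simp add: k_def paths_len_def)
      have "Spath s r es (Zop s r Zm x) \<gamma> - Zop s r Zm (Spath s r es x) \<gamma>
          = (\<Sum>b\<in>paths_len s r k. Spath_comm_kernel s r Zm es \<gamma> b * x b)"
        using Spath_Zop_comm_eq_defect[OF ws es refl g finite_paths_len finite_paths_len] matop_defect_Spath[OF es refl g finite_paths_len finite_paths_len] by simp
      then show ?thesis using False inP by (simp add: graded_op_def level_length_eq_paths_len k_def)
    qed
  qed
qed

lemma sum_tensorI_prepend:
  assumes es: "es \<noteq> []" and p: "p = length es" and b: "\<beta> \<in> paths_len s r k"
    and c: "prepend es \<beta> \<in> fock_paths s r"
    and fin: "finite (paths_len s r (k + p))"
  shows "(\<Sum>\<beta>'\<in>paths_len s r (k + p). tensorI s r p Zm k (prepend es \<beta>) \<beta>' * x \<beta>')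
       = (\<Sum>b\<in>extendable s r es k. Zm k \<beta> b * x (prepend es b))"
proof -
  have cl: "prepend es \<beta> \<in> paths_len s r (k + p)" using b c p by (simp add: paths_len_def prepend_def)
  have tk: "take p (snd (prepend es \<beta>)) = es" using p by (simp add: prepend_def)
  have "(\<Sum>\<beta>'\<in>paths_len s r (k + p). tensorI s r p Zm k (prepend es \<beta>) \<beta>' * x \<beta>')
      = (\<Sum>\<beta>'\<in>with_prefix s r es k. Zm k \<beta> (pdrop p \<beta>') * x \<beta>')"
  proof (rule sum.mono_neutral_cong_right)
    show "finite (paths_len s r (k + p))" by (rule fin)
    show "with_prefix s r es k \<subseteq> paths_len s r (k + p)" using with_prefix_subset p by blast
    show "\<forall>i\<in>paths_len s r (k + p) - with_prefix s r es k. tensorI s r p Zm k (prepend es \<beta>) i * x i = 0"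
      using tk p by (auto simp: tensorI_pdrop with_prefix_def)
    show "tensorI s r p Zm k (prepend es \<beta>) i * x i = Zm k \<beta> (pdrop p i) * x i" if "i \<in> with_prefix s r es k" for i
      using that tk p cl by (auto simp: tensorI_pdrop with_prefix_def pdrop_prepend)
  qed
  also have "\<dots> = (\<Sum>b\<in>extendable s r es k. Zm k \<beta> b * x (prepend es b))"
    by (simp add: sum_with_prefix pdrop_prepend p)
  finally show ?thesis .
qed

lemma Zop_Spath_adj:
  assumes b: "\<beta> \<in> paths_len s r k" and fin: "finite (paths_len s r k)"
  shows "Zop s r Zm (Spath_adj s r es x) \<beta> = (\<Sum>b\<in>extendable s r es k. Zm k \<beta> b * x (prepend es b))"
proof -
  have "Zop s r Zm (Spath_adj s r es x) \<beta> = (\<Sum>b\<in>paths_len s r k. Zm k \<beta> b * Spath_adj s r es x b)"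
    by (rule Zop_apply[OF b])
  also have "\<dots> = (\<Sum>b\<in>extendable s r es k. Zm k \<beta> b * x (prepend es b))"
  proof (rule sum.mono_neutral_cong_right)
    show "finite (paths_len s r k)" by (rule fin)
    show "extendable s r es k \<subseteq> paths_len s r k" by (rule extendable_subset)
    show "\<forall>i\<in>paths_len s r k - extendable s r es k. Zm k \<beta> i * Spath_adj s r es x i = 0"
      by (auto simp: Spath_adj_def extendable_def)
    show "Zm k \<beta> i * Spath_adj s r es x i = Zm k \<beta> i * x (prepend es i)" if "i \<in> extendable s r es k" for i
      using that by (auto simp: Spath_adj_def extendable_def paths_len_def)
  qed
  finally show ?thesis .
qed

lemma Spath_adj_Zop_comm_eq_defect:
  assumes ws: "weight_seq s r Zm" and es: "es \<noteq> []" and p: "p = length es"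
    and b: "\<beta> \<in> paths_len s r k"
    and fin: "finite (paths_len s r (k + p))" "finite (paths_len s r k)"
  shows "Spath_adj s r es (Zop s r Zm x) \<beta> - Zop s r Zm (Spath_adj s r es x) \<beta>
       = - Spath_adj s r es (matop (paths_len s r (k + p)) (tensor_defect s r p Zm k) x) \<beta>"
proof (cases "prepend es \<beta> \<in> fock_paths s r")
  case True
  have bP: "\<beta> \<in> fock_paths s r" using b by (simp add: paths_len_def)
  have cl: "prepend es \<beta> \<in> paths_len s r (k + p)" using b True p by (simp add: paths_len_def prepend_def)
  have S_Z: "Spath_adj s r es (Zop s r Zm x) \<beta> = (\<Sum>\<beta>'\<in>paths_len s r (k + p). Zm (k + p) (prepend es \<beta>) \<beta>' * x \<beta>')"
    using True bP Zop_apply[OF cl, of Zm x] by (simp add: Spath_adj_def)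
  have S_M: "Spath_adj s r es (matop (paths_len s r (k + p)) (tensor_defect s r p Zm k) x) \<beta>
     = (\<Sum>\<beta>'\<in>paths_len s r (k + p). tensorI s r p Zm k (prepend es \<beta>) \<beta>' * x \<beta>')
       - (\<Sum>\<beta>'\<in>paths_len s r (k + p). Zm (k + p) (prepend es \<beta>) \<beta>' * x \<beta>')"
    using True bP cl by (simp add: Spath_adj_def matop_def tensor_defect_def sum_subtractf left_diff_distrib)
  show ?thesis unfolding S_Z S_M sum_tensorI_prepend[OF es p b True fin(1)] Zop_Spath_adj[OF b fin(2)] by simp
next
  case False
  have "Zm k \<beta> b' * Spath_adj s r es x b' = 0" for b'
    using False weight_seq_prepend_iff[OF ws es, of k \<beta> b'] by (auto simp: Spath_adj_def)
  then have "Zop s r Zm (Spath_adj s r es x) \<beta> = 0"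
    unfolding Zop_apply[OF b] by (intro sum.neutral ballI)
  then show ?thesis using False by (simp add: Spath_adj_def)
qed

lemma Spath_adj_Zop_comm_graded:
  fixes s r :: "'e::finite \<Rightarrow> 'v::finite"
  assumes ws: "weight_seq s r Zm" and es: "es \<noteq> []"
  shows "(\<lambda>x a. Spath_adj s r es (Zop s r Zm x) a - Zop s r Zm (Spath_adj s r es x) a)
       = graded_op (fock_paths s r) (\<lambda>a. length (snd a)) (\<lambda>m. m + length es) 0 (Spath_adj_comm_kernel s r Zm es)"
proof (intro ext)
  fix x \<beta>
  let ?p = "length es"
  show "Spath_adj s r es (Zop s r Zm x) \<beta> - Zop s r Zm (Spath_adj s r es x) \<beta>
      = graded_op (fock_paths s r) (\<lambda>a. length (snd a)) (\<lambda>m. m + ?p) 0 (Spath_adj_comm_kernel s r Zm es) x \<beta>"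
  proof (cases "\<beta> \<in> fock_paths s r")
    case False
    then show ?thesis by (simp add: Spath_adj_def Zop_def graded_op_def)
  next
    case inP: True
    define k where "k = length (snd \<beta>)"
    have b: "\<beta> \<in> paths_len s r k" using inP by (simp add: k_def paths_len_def)
    have "Spath_adj s r es (Zop s r Zm x) \<beta> - Zop s r Zm (Spath_adj s r es x) \<beta>
        = - Spath_adj s r es (matop (paths_len s r (k + ?p)) (tensor_defect s r ?p Zm k) x) \<beta>"
      by (rule Spath_adj_Zop_comm_eq_defect[OF ws es refl b finite_paths_len finite_paths_len])
    also have "\<dots> = (\<Sum>b\<in>paths_len s r (k + ?p). Spath_adj_comm_kernel s r Zm es \<beta> b * x b)"
    proof (cases "prepend es \<beta> \<in> fock_paths s r")
      case True
      have cl: "prepend es \<beta> \<in> paths_len s r (k + ?p)" using b True by (simp add: paths_len_def prepend_def)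
      show ?thesis using True inP cl
        by (simp add: Spath_adj_def matop_def Spath_adj_comm_kernel_def k_def sum_negf)
    next
      case False
      then show ?thesis by (simp add: Spath_adj_def Spath_adj_comm_kernel_def)
    qed
    finally show ?thesis using inP by (simp add: graded_op_def level_length_eq_paths_len k_def)
  qed
qed

lemma Zop_graded:
  "Zop s r Zm = graded_op (fock_paths s r) (\<lambda>a. length (snd a)) id 0 (\<lambda>\<gamma> b. Zm (length (snd \<gamma>)) \<gamma> b)"
  by (intro ext) (simp add: Zop_def graded_op_def level_length_eq_paths_len)

lemma Spath_adj_graded:
  fixes s r :: "'e::finite \<Rightarrow> 'v::finite"
  shows "Spath_adj s r es = graded_op (fock_paths s r) (\<lambda>a. length (snd a)) (\<lambda>m. m + length es) 0
     (\<lambda>\<beta> b. if b = prepend es \<beta> then 1 else 0)"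
proof (intro ext)
  fix y \<beta>
  show "Spath_adj s r es y \<beta> = graded_op (fock_paths s r) (\<lambda>a. length (snd a)) (\<lambda>m. m + length es) 0
     (\<lambda>\<beta> b. if b = prepend es \<beta> then 1 else 0) y \<beta>"
  proof (cases "\<beta> \<in> fock_paths s r")
    case True
    have "(\<Sum>b\<in>paths_len s r (length (snd \<beta>) + length es). (if b = prepend es \<beta> then 1 else 0) * y b)
        = (if prepend es \<beta> \<in> paths_len s r (length (snd \<beta>) + length es) then y (prepend es \<beta>) else 0)"
      using finite_paths_len[of s r "length (snd \<beta>) + length es"]
      by (simp add: if_distrib[of "\<lambda>c. c * _"] sum.delta cong: if_cong)
    then show ?thesis using True by (simp add: Spath_adj_def graded_op_def level_length_eq_paths_len paths_len_def prepend_def)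
  next
    case False
    then show ?thesis by (simp add: Spath_adj_def graded_op_def)
  qed
qed

lemma Spath_comm_level_bound:
  fixes s r :: "'e::finite \<Rightarrow> 'v::finite"
  assumes ws: "weight_seq s r Zm" and es: "es \<noteq> []" and p: "p = length es" and m: "m \<ge> p"
  shows "sqnorm (level (fock_paths s r) (\<lambda>a. length (snd a)) m)
           (graded_op (fock_paths s r) (\<lambda>a. length (snd a)) (\<lambda>m. m - p) p (Spath_comm_kernel s r Zm es) x)
       \<le> (fin_opnorm (paths_len s r (m - p + p)) (tensor_defect s r p Zm (m - p)))\<^sup>2
           * sqnorm (level (fock_paths s r) (\<lambda>a. length (snd a)) (m - p)) x"
proof -
  define k where "k = m - p"
  have mk: "m = k + p" using m by (simp add: k_def)
  let ?S = "paths_len s r (k + p)"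
  have "sqnorm ?S (graded_op (fock_paths s r) (\<lambda>a. length (snd a)) (\<lambda>m. m - p) p (Spath_comm_kernel s r Zm es) x)
      = sqnorm ?S (matop ?S (tensor_defect s r p Zm k) (Spath s r es x))"
  proof (rule sqnorm_cong)
    fix \<gamma> assume g: "\<gamma> \<in> ?S"
    have "graded_op (fock_paths s r) (\<lambda>a. length (snd a)) (\<lambda>m. m - p) p (Spath_comm_kernel s r Zm es) x \<gamma>
        = Spath s r es (Zop s r Zm x) \<gamma> - Zop s r Zm (Spath s r es x) \<gamma>"
      using fun_cong[OF fun_cong[OF Spath_Zop_comm_graded[OF ws es], of x], of \<gamma>] p by simp
    also have "\<dots> = matop ?S (tensor_defect s r p Zm k) (Spath s r es x) \<gamma>"
      by (rule Spath_Zop_comm_eq_defect[OF ws es p g finite_paths_len finite_paths_len])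
    finally show "graded_op (fock_paths s r) (\<lambda>a. length (snd a)) (\<lambda>m. m - p) p (Spath_comm_kernel s r Zm es) x \<gamma>
        = matop ?S (tensor_defect s r p Zm k) (Spath s r es x) \<gamma>" .
  qed
  also have "\<dots> \<le> (fin_opnorm ?S (tensor_defect s r p Zm k))\<^sup>2 * sqnorm ?S (Spath s r es x)"
    by (rule sqnorm_matop_le[OF finite_paths_len])
  also have "\<dots> \<le> (fin_opnorm ?S (tensor_defect s r p Zm k))\<^sup>2 * sqnorm (paths_len s r k) x"
    by (rule mult_left_mono) (use sqnorm_Spath_le[OF es finite_paths_len finite_paths_len, of s r k x] p in auto)
  finally show ?thesis unfolding level_length_eq_paths_len mk by simp
qed

lemma Spath_adj_comm_level_bound:
  fixes s r :: "'e::finite \<Rightarrow> 'v::finite"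
  assumes ws: "weight_seq s r Zm" and es: "es \<noteq> []" and p: "p = length es"
  shows "sqnorm (level (fock_paths s r) (\<lambda>a. length (snd a)) k)
           (graded_op (fock_paths s r) (\<lambda>a. length (snd a)) (\<lambda>m. m + p) 0 (Spath_adj_comm_kernel s r Zm es) x)
       \<le> (fin_opnorm (paths_len s r (k + p)) (tensor_defect s r p Zm k))\<^sup>2
           * sqnorm (level (fock_paths s r) (\<lambda>a. length (snd a)) (k + p)) x"
proof -
  let ?S = "paths_len s r (k + p)"
  let ?y = "matop ?S (tensor_defect s r p Zm k) x"
  have "sqnorm (paths_len s r k) (graded_op (fock_paths s r) (\<lambda>a. length (snd a)) (\<lambda>m. m + p) 0 (Spath_adj_comm_kernel s r Zm es) x)
      = sqnorm (paths_len s r k) (\<lambda>\<beta>. - Spath_adj s r es ?y \<beta>)"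
  proof (rule sqnorm_cong)
    fix \<beta> assume b: "\<beta> \<in> paths_len s r k"
    have "graded_op (fock_paths s r) (\<lambda>a. length (snd a)) (\<lambda>m. m + p) 0 (Spath_adj_comm_kernel s r Zm es) x \<beta>
        = Spath_adj s r es (Zop s r Zm x) \<beta> - Zop s r Zm (Spath_adj s r es x) \<beta>"
      using fun_cong[OF fun_cong[OF Spath_adj_Zop_comm_graded[OF ws es], of x], of \<beta>] p by simp
    also have "\<dots> = - Spath_adj s r es ?y \<beta>"
      by (rule Spath_adj_Zop_comm_eq_defect[OF ws es p b finite_paths_len finite_paths_len])
    finally show "graded_op (fock_paths s r) (\<lambda>a. length (snd a)) (\<lambda>m. m + p) 0 (Spath_adj_comm_kernel s r Zm es) x \<beta>
        = - Spath_adj s r es ?y \<beta>" .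
  qed
  also have "\<dots> = sqnorm (paths_len s r k) (Spath_adj s r es ?y)" unfolding sqnorm_def by simp
  also have "\<dots> \<le> sqnorm ?S ?y" using sqnorm_Spath_adj_le[OF finite_paths_len finite_paths_len, of s r k es ?y] p by simp
  also have "\<dots> \<le> (fin_opnorm ?S (tensor_defect s r p Zm k))\<^sup>2 * sqnorm ?S x"
    by (rule sqnorm_matop_le[OF finite_paths_len])
  finally show ?thesis unfolding level_length_eq_paths_len .
qed

lemma Zop_level_bound:
  fixes s r :: "'e::finite \<Rightarrow> 'v::finite"
  assumes ws: "weight_seq s r Zm"
  obtains C where "\<And>m x. sqnorm (level (fock_paths s r) (\<lambda>a. length (snd a)) m)
           (graded_op (fock_paths s r) (\<lambda>a. length (snd a)) id 0 (\<lambda>\<gamma> b. Zm (length (snd \<gamma>)) \<gamma> b) x)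
       \<le> C\<^sup>2 * sqnorm (level (fock_paths s r) (\<lambda>a. length (snd a)) (id m)) x"
proof -
  obtain C where C: "\<And>k. fin_opnorm (paths_len s r k) (Zm k) \<le> C"
    using ws unfolding weight_seq_def by blast
  have "sqnorm (paths_len s r m) (Zop s r Zm x) \<le> C\<^sup>2 * sqnorm (paths_len s r m) x" for m x
  proof -
    have "sqnorm (paths_len s r m) (Zop s r Zm x) = sqnorm (paths_len s r m) (matop (paths_len s r m) (Zm m) x)"
      by (rule sqnorm_cong) (simp add: Zop_apply matop_def)
    also have "\<dots> \<le> (fin_opnorm (paths_len s r m) (Zm m))\<^sup>2 * sqnorm (paths_len s r m) x"
      by (rule sqnorm_matop_le[OF finite_paths_len])
    also have "\<dots> \<le> C\<^sup>2 * sqnorm (paths_len s r m) x"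
      by (rule mult_right_mono[OF power_mono[OF C fin_opnorm_nonneg[OF finite_paths_len]] sqnorm_nonneg])
    finally show ?thesis .
  qed
  then show ?thesis using that[of C] by (simp add: level_length_eq_paths_len Zop_graded[symmetric])
qed

lemma Spath_adj_level_bound:
  fixes s r :: "'e::finite \<Rightarrow> 'v::finite"
  shows "sqnorm (level (fock_paths s r) (\<lambda>a. length (snd a)) m)
           (graded_op (fock_paths s r) (\<lambda>a. length (snd a)) (\<lambda>m. m + length es) 0
              (\<lambda>\<beta> b. if b = prepend es \<beta> then 1 else 0) x)
       \<le> 1 * sqnorm (level (fock_paths s r) (\<lambda>a. length (snd a)) (m + length es)) x"
  using sqnorm_Spath_adj_le[OF finite_paths_len finite_paths_len, of s r m es x]
  by (simp add: level_length_eq_paths_len Spath_adj_graded[symmetric])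

lemma Zop_ell2:
  fixes s r :: "'e::finite \<Rightarrow> 'v::finite"
  assumes ws: "weight_seq s r Zm" and x: "x \<in> ell2 (fock_paths s r)"
  shows "Zop s r Zm x \<in> ell2 (fock_paths s r)"
proof -
  obtain C where C: "\<And>m x. sqnorm (level (fock_paths s r) (\<lambda>a. length (snd a)) m)
           (graded_op (fock_paths s r) (\<lambda>a. length (snd a)) id 0 (\<lambda>\<gamma> b. Zm (length (snd \<gamma>)) \<gamma> b) x)
       \<le> C\<^sup>2 * sqnorm (level (fock_paths s r) (\<lambda>a. length (snd a)) (id m)) x"
    using Zop_level_bound[OF ws] by blast
  show ?thesis unfolding Zop_graded
    by (rule graded_op_ell2[OF _ _ C x]) (auto simp: level_length_eq_paths_len finite_paths_len)
qed

lemma Spath_adj_ell2: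
  fixes s r :: "'e::finite \<Rightarrow> 'v::finite"
  assumes x: "x \<in> ell2 (fock_paths s r)"
  shows "Spath_adj s r es x \<in> ell2 (fock_paths s r)"
  unfolding Spath_adj_graded
  by (rule graded_op_ell2[OF _ _ Spath_adj_level_bound x])
    (auto simp: level_length_eq_paths_len finite_paths_len inj_on_def)

section \<open>Decomposition by prefixes and the adjoint of \<open>S\<^sub>\<alpha>\<close>\<close>

definition prefix_path :: "('e \<Rightarrow> 'v) \<Rightarrow> nat \<Rightarrow> ('v,'e) gpath \<Rightarrow> ('v,'e) gpath" where
  "prefix_path s p b = (s (last (take p (snd b))), take p (snd b))"

lemma prefix_path_unique:
  assumes p: "p \<ge> 1" and b: "b \<in> paths_len s r (n + p)"
  shows "prefix_path s p b \<in> paths_len s r p"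
    and "\<And>\<alpha>. \<alpha> \<in> paths_len s r p \<Longrightarrow> take p (snd b) = snd \<alpha> \<longleftrightarrow> \<alpha> = prefix_path s p b"
proof -
  define t where "t = take p (snd b)"
  have lt: "length t = p" using b by (simp add: t_def paths_len_def)
  have tne: "t \<noteq> []" using lt p by auto
  have "take (length t) (snd b) = t" using lt t_def by simp
  then have "prepend t (pdrop (length t) b) = b" by (rule prepend_pdrop)
  then have "is_path s r (prepend t (pdrop (length t) b))" using b by (simp add: paths_len_def fock_paths_def)
  then have sc: "successively (\<lambda>a b. s a = r b) t" using is_path_prepend[OF tne] by blast
  show pin: "prefix_path s p b \<in> paths_len s r p"
    using sc tne lt by (simp add: prefix_path_def t_def[symmetric] paths_len_def fock_paths_def is_path_iff_successively)
  fix \<alpha> assume a: "\<alpha> \<in> paths_len s r p"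
  show "take p (snd b) = snd \<alpha> \<longleftrightarrow> \<alpha> = prefix_path s p b"
  proof
    assume h: "take p (snd b) = snd \<alpha>"
    obtain v es where av: "\<alpha> = (v, es)" by (cases \<alpha>)
    have "is_path s r (v, es)" using a av by (simp add: paths_len_def fock_paths_def)
    moreover have "es = t" using h av by (simp add: t_def)
    ultimately have "v = s (last t)" using tne by (simp add: is_path_iff_successively)
    then show "\<alpha> = prefix_path s p b" using av \<open>es = t\<close> by (simp add: prefix_path_def t_def)
  next
    assume "\<alpha> = prefix_path s p b"
    then show "take p (snd b) = snd \<alpha>" by (simp add: prefix_path_def)
  qed
qed

lemma sum_prefix_indicator:
  fixes s r :: "'e::finite \<Rightarrow> 'v::finite"
  assumes p: "p \<ge> 1" and b: "b \<in> paths_len s r (n + p)"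
  shows "(\<Sum>\<alpha>\<in>paths_len s r p. (if take p (snd b) = snd \<alpha> then y b else 0)) = y b"
proof -
  have "(\<Sum>\<alpha>\<in>paths_len s r p. (if take p (snd b) = snd \<alpha> then y b else 0))
      = (\<Sum>\<alpha>\<in>paths_len s r p. (if \<alpha> = prefix_path s p b then y b else 0))"
    by (rule sum.cong[OF refl]) (use prefix_path_unique(2)[OF p b] in auto)
  also have "\<dots> = y b" using prefix_path_unique(1)[OF p b] finite_paths_len[of s r p] by simp
  finally show ?thesis .
qed

lemma matop_prefix_decomp:
  fixes s r :: "'e::finite \<Rightarrow> 'v::finite"
  assumes p: "p \<ge> 1"
  shows "matop (paths_len s r (n + p)) M y \<gamma>
     = (\<Sum>\<alpha>\<in>paths_len s r p. matop (paths_len s r (n + p)) M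
          (\<lambda>\<beta>. if take p (snd \<beta>) = snd \<alpha> then y \<beta> else 0) \<gamma>)"
proof (cases "\<gamma> \<in> paths_len s r (n + p)")
  case True
  have "matop (paths_len s r (n + p)) M y \<gamma> = (\<Sum>b\<in>paths_len s r (n + p). M \<gamma> b * y b)"
    using True by (simp add: matop_def)
  also have "\<dots> = (\<Sum>b\<in>paths_len s r (n + p). \<Sum>\<alpha>\<in>paths_len s r p.
        M \<gamma> b * (if take p (snd b) = snd \<alpha> then y b else 0))"
    by (rule sum.cong[OF refl]) (simp add: sum_prefix_indicator[OF p] sum_distrib_left[symmetric])
  also have "\<dots> = (\<Sum>\<alpha>\<in>paths_len s r p. \<Sum>b\<in>paths_len s r (n + p).
        M \<gamma> b * (if take p (snd b) = snd \<alpha> then y b else 0))"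
    by (rule sum.swap)
  also have "\<dots> = (\<Sum>\<alpha>\<in>paths_len s r p. matop (paths_len s r (n + p)) M
          (\<lambda>\<beta>. if take p (snd \<beta>) = snd \<alpha> then y \<beta> else 0) \<gamma>)"
    using True by (simp add: matop_def)
  finally show ?thesis .
next
  case False
  then show ?thesis by (simp add: matop_def)
qed

lemma Spath_Spath_adj_prefix:
  assumes es: "es \<noteq> []" and p: "p = length es" and b: "b \<in> paths_len s r (n + p)"
  shows "Spath s r es (Spath_adj s r es (\<lambda>\<beta>. if take p (snd \<beta>) = es then y \<beta> else 0)) b
       = (if take p (snd b) = es then y b else 0)"
proof (cases "take p (snd b) = es")
  case True
  have bP: "b \<in> fock_paths s r" using b by (simp add: paths_len_def)
  have c: "prepend es (pdrop p b) = b" using prepend_pdrop[of es b] True p by simp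
  have "pdrop p b \<in> fock_paths s r" using pdrop_in_fock_paths[OF bP] .
  then show ?thesis using True es p b c bP by (simp add: Spath_apply_paths_len with_prefix_def Spath_adj_def)
next
  case False
  then show ?thesis using es p b by (simp add: Spath_apply_paths_len with_prefix_def)
qed

lemma inner2_indicator:
  assumes "\<beta> \<in> P"
  shows "inner2 P (\<lambda>a. if a = \<beta> then 1 else 0) z = cnj (z \<beta>)"
proof -
  have "inner2 P (\<lambda>a. if a = \<beta> then 1 else 0) z = infsum (\<lambda>a. (if a = \<beta> then 1 else 0) * cnj (z a)) {\<beta>}"
    unfolding inner2_def by (rule infsum_cong_neutral) (use assms in auto)
  then show ?thesis by simp
qed

lemma inner2_Spath_adj:
  assumes es: "es \<noteq> []"
  shows "inner2 (fock_paths s r) (Spath s r es x) y = inner2 (fock_paths s r) x (Spath_adj s r es y)"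
proof -
  let ?P = "fock_paths s r"
  define Qa where "Qa = {b \<in> ?P. prepend es b \<in> ?P}"
  have injc: "inj_on (prepend es) Qa"
    by (rule inj_on_inverseI[where g="pdrop (length es)"]) (simp add: pdrop_prepend)
  have "inner2 ?P (Spath s r es x) y = infsum (\<lambda>\<gamma>. Spath s r es x \<gamma> * cnj (y \<gamma>)) (prepend es ` Qa)"
    unfolding inner2_def
  proof (rule infsum_cong_neutral)
    fix \<gamma> assume g: "\<gamma> \<in> ?P - prepend es ` Qa"
    show "Spath s r es x \<gamma> * cnj (y \<gamma>) = 0"
    proof (cases "take (length es) (snd \<gamma>) = es")
      case True
      have c1: "prepend es (pdrop (length es) \<gamma>) = \<gamma>" by (rule prepend_pdrop[OF True])
      have c2: "pdrop (length es) \<gamma> \<in> Qa"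
        using g pdrop_in_fock_paths[of \<gamma> s r] c1 by (auto simp: Qa_def)
      have "prepend es (pdrop (length es) \<gamma>) \<in> prepend es ` Qa" using c2 by (rule imageI)
      then have "\<gamma> \<in> prepend es ` Qa" unfolding c1 .
      then show ?thesis using g by blast
    next
      case False
      then show ?thesis using es by (simp add: Spath_apply)
    qed
  qed (auto simp: Qa_def)
  also have "\<dots> = infsum ((\<lambda>\<gamma>. Spath s r es x \<gamma> * cnj (y \<gamma>)) \<circ> prepend es) Qa"
    by (rule infsum_reindex[OF injc])
  also have "\<dots> = infsum (\<lambda>b. x b * cnj (Spath_adj s r es y b)) ?P"
  proof (rule infsum_cong_neutral)
    fix b assume "b \<in> ?P - Qa"
    then show "x b * cnj (Spath_adj s r es y b) = 0" by (auto simp: Qa_def Spath_adj_def)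
  next
    fix b assume "b \<in> Qa \<inter> ?P"
    then show "((\<lambda>\<gamma>. Spath s r es x \<gamma> * cnj (y \<gamma>)) \<circ> prepend es) b = x b * cnj (Spath_adj s r es y b)"
      using es by (auto simp: Qa_def Spath_adj_def Spath_apply pdrop_prepend) (simp add: prepend_def)
  qed (auto simp: Qa_def)
  finally show ?thesis unfolding inner2_def .
qed

section \<open>Condition A(p)\<close>

lemma finite_level_length:
  "finite (level (fock_paths (s :: 'e::finite \<Rightarrow> 'v::finite) r) (\<lambda>a. length (snd a)) m)"
  by (simp add: level_length_eq_paths_len finite_paths_len)

lemma path_of_length_pos:
  "\<alpha> \<in> paths_len s r p \<Longrightarrow> p \<ge> 1 \<Longrightarrow> snd \<alpha> \<noteq> [] \<and> length (snd \<alpha>) = p"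
  by (auto simp: paths_len_def)

lemma condA_iff_defect_tendsto:
  "condA s r Zm p \<longleftrightarrow> (\<lambda>k. fin_opnorm (paths_len s r (k + p)) (tensor_defect s r p Zm k)) \<longlonglongrightarrow> 0"
  unfolding condA_def tensor_defect_def by simp

lemma commutes_mod_compact_cong:
  assumes "\<And>x. x \<in> ell2 P \<Longrightarrow> T x = T' x" and "\<And>x. x \<in> ell2 P \<Longrightarrow> Z x \<in> ell2 P"
  shows "commutes_mod_compact P T Z \<longleftrightarrow> commutes_mod_compact P T' Z"
  unfolding commutes_mod_compact_def compact_op_def using assms by simp

lemma condA_imp_Spath_commutes:
  fixes s r :: "'e::finite \<Rightarrow> 'v::finite"
  assumes ws: "weight_seq s r Zm" and A: "condA s r Zm p"
    and \<alpha>: "\<alpha> \<in> paths_len s r p" and p: "p \<ge> 1"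
  shows "commutes_mod_compact (fock_paths s r) (Spath s r (snd \<alpha>)) (Zop s r Zm)"
proof -
  obtain es: "snd \<alpha> \<noteq> []" "length (snd \<alpha>) = p" using path_of_length_pos[OF \<alpha> p] by blast
  define c where "c k = fin_opnorm (paths_len s r (k + p)) (tensor_defect s r p Zm k)" for k
  have "compact_op (fock_paths s r)
      (graded_op (fock_paths s r) (\<lambda>a. length (snd a)) (\<lambda>m. m - p) p (Spath_comm_kernel s r Zm (snd \<alpha>)))"
  proof (rule graded_op_compact[OF finite_level_length])
    show "inj_on (\<lambda>m. m - p) {p..}" by (auto simp: inj_on_def)
    show "(\<lambda>m. c (m - p)) \<longlonglongrightarrow> 0"
      by (rule LIMSEQ_offset[where k=p]) (use A in \<open>simp add: condA_iff_defect_tendsto c_def\<close>)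
  qed (use Spath_comm_level_bound[OF ws es(1) es(2)[symmetric]] in \<open>simp add: c_def\<close>)
  then show ?thesis
    unfolding commutes_mod_compact_def Spath_Zop_comm_graded[OF ws es(1)] es(2) .
qed

lemma Spath_commutes_eventually_small:
  fixes s r :: "'e::finite \<Rightarrow> 'v::finite"
  assumes ws: "weight_seq s r Zm" and \<alpha>: "\<alpha> \<in> paths_len s r p" and p: "p \<ge> 1"
    and H: "commutes_mod_compact (fock_paths s r) (Spath s r (snd \<alpha>)) (Zop s r Zm)" and \<delta>: "\<delta> > 0"
  shows "\<exists>N. \<forall>n\<ge>N. \<forall>x. sqnorm (paths_len s r (n + p))
      (\<lambda>\<gamma>. Spath s r (snd \<alpha>) (Zop s r Zm x) \<gamma> - Zop s r Zm (Spath s r (snd \<alpha>) x) \<gamma>)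
    \<le> \<delta>\<^sup>2 * sqnorm (paths_len s r n) x"
proof -
  obtain es: "snd \<alpha> \<noteq> []" "length (snd \<alpha>) = p" using path_of_length_pos[OF \<alpha> p] by blast
  let ?T = "graded_op (fock_paths s r) (\<lambda>a. length (snd a)) (\<lambda>m. m - p) p (Spath_comm_kernel s r Zm (snd \<alpha>))"
  have comm: "(\<lambda>\<gamma>. Spath s r (snd \<alpha>) (Zop s r Zm x) \<gamma> - Zop s r Zm (Spath s r (snd \<alpha>) x) \<gamma>) = ?T x" for x
    using fun_cong[OF Spath_Zop_comm_graded[OF ws es(1)], of x] es(2) by simp
  have cpt: "compact_op (fock_paths s r) ?T"
    using H unfolding commutes_mod_compact_def Spath_Zop_comm_graded[OF ws es(1)] es(2) .
  have inj: "inj_on (\<lambda>m. m - p) {p..}" by (auto simp: inj_on_def)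
  from graded_op_eventually_small[OF finite_level_length inj cpt \<delta>]
  obtain N where N: "\<forall>m\<ge>N. \<forall>x. sqnorm (level (fock_paths s r) (\<lambda>a. length (snd a)) m) (?T x)
      \<le> \<delta>\<^sup>2 * sqnorm (level (fock_paths s r) (\<lambda>a. length (snd a)) (m - p)) x"
    by blast
  have bound: "sqnorm (paths_len s r (n + p)) (?T x) \<le> \<delta>\<^sup>2 * sqnorm (paths_len s r n) x"
    if "n \<ge> N" for n x
    using N[rule_format, of "n + p" x] that by (simp add: level_length_eq_paths_len)
  show ?thesis unfolding comm by (intro exI[of _ N] allI impI bound)
qed

text \<open>The common prefix of length \<open>p\<close> of the two indices splits the matrix into blocks; the block
  of \<open>\<alpha>\<close> is \<open>[S\<^sub>\<alpha>, Z]\<close> on the range of \<open>S\<^sub>\<alpha>\<close>.\<close>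
lemma tensor_defect_norm_le:
  fixes s r :: "'e::finite \<Rightarrow> 'v::finite" and \<delta> :: real
  assumes ws: "weight_seq s r Zm" and p: "p \<ge> 1" and \<delta>: "\<delta> \<ge> 0"
    and small: "\<And>\<alpha> x. \<alpha> \<in> paths_len s r p \<Longrightarrow> sqnorm (paths_len s r (n + p))
      (\<lambda>\<gamma>. Spath s r (snd \<alpha>) (Zop s r Zm x) \<gamma> - Zop s r Zm (Spath s r (snd \<alpha>) x) \<gamma>)
      \<le> \<delta>\<^sup>2 * sqnorm (paths_len s r n) x"
  shows "fin_opnorm (paths_len s r (n + p)) (tensor_defect s r p Zm n) \<le> card (paths_len s r p) * \<delta>"
proof (rule fin_opnorm_le[OF finite_paths_len])
  let ?S = "paths_len s r (n + p)" and ?M = "tensor_defect s r p Zm n"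
  show "card (paths_len s r p) * \<delta> \<ge> 0" using \<delta> by simp
  fix y :: "('v, 'e) gpath \<Rightarrow> complex"
  define block where "block \<alpha> \<beta> = (if take p (snd \<beta>) = snd \<alpha> then y \<beta> else 0)" for \<alpha> \<beta> :: "('v, 'e) gpath"
  have per_block: "sqrt (sqnorm ?S (matop ?S ?M (block \<alpha>))) \<le> \<delta> * sqrt (sqnorm ?S y)"
    if \<alpha>: "\<alpha> \<in> paths_len s r p" for \<alpha>
  proof -
    obtain es: "snd \<alpha> \<noteq> []" "p = length (snd \<alpha>)" using path_of_length_pos[OF \<alpha> p] by auto
    define x where "x = Spath_adj s r (snd \<alpha>) (block \<alpha>)"
    have "sqnorm ?S (matop ?S ?M (block \<alpha>))
        = sqnorm ?S (\<lambda>\<gamma>. Spath s r (snd \<alpha>) (Zop s r Zm x) \<gamma> - Zop s r Zm (Spath s r (snd \<alpha>) x) \<gamma>)"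
    proof (rule sqnorm_cong)
      fix \<gamma> assume \<gamma>: "\<gamma> \<in> ?S"
      have "matop ?S ?M (block \<alpha>) \<gamma> = matop ?S ?M (Spath s r (snd \<alpha>) x) \<gamma>"
        unfolding matop_def x_def block_def using Spath_Spath_adj_prefix[OF es, of _ s r n y]
        by (auto intro!: sum.cong)
      also have "\<dots> = Spath s r (snd \<alpha>) (Zop s r Zm x) \<gamma> - Zop s r Zm (Spath s r (snd \<alpha>) x) \<gamma>"
        by (rule Spath_Zop_comm_eq_defect[OF ws es \<gamma> finite_paths_len finite_paths_len, symmetric])
      finally show "matop ?S ?M (block \<alpha>) \<gamma> = \<dots>" .
    qed
    also have "\<dots> \<le> \<delta>\<^sup>2 * sqnorm (paths_len s r n) x" by (rule small[OF \<alpha>])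
    also have "\<dots> \<le> \<delta>\<^sup>2 * sqnorm ?S (block \<alpha>)"
      using sqnorm_Spath_adj_le[OF finite_paths_len finite_paths_len, of s r n "snd \<alpha>" "block \<alpha>"] es
      by (intro mult_left_mono) (auto simp: x_def)
    also have "\<dots> \<le> \<delta>\<^sup>2 * sqnorm ?S y"
      by (intro mult_left_mono) (auto simp: sqnorm_def block_def intro!: sum_mono)
    finally have "sqrt (sqnorm ?S (matop ?S ?M (block \<alpha>))) \<le> sqrt (\<delta>\<^sup>2 * sqnorm ?S y)"
      by (rule real_sqrt_le_mono)
    then show ?thesis using \<delta> by (simp add: real_sqrt_mult)
  qed
  have decomp: "matop ?S ?M y = (\<lambda>\<gamma>. \<Sum>\<alpha>\<in>paths_len s r p. matop ?S ?M (block \<alpha>) \<gamma>)"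
    unfolding block_def by (rule ext) (rule matop_prefix_decomp[OF p])
  have "sqrt (sqnorm ?S (matop ?S ?M y)) = sqrt (sqnorm ?S (\<lambda>\<gamma>. \<Sum>\<alpha>\<in>paths_len s r p. matop ?S ?M (block \<alpha>) \<gamma>))"
    by (simp only: decomp)
  also have "\<dots> \<le> (\<Sum>\<alpha>\<in>paths_len s r p. sqrt (sqnorm ?S (matop ?S ?M (block \<alpha>))))"
    by (rule sqrt_sqnorm_sum_le[OF finite_paths_len])
  also have "\<dots> \<le> (\<Sum>\<alpha>\<in>paths_len s r p. \<delta> * sqrt (sqnorm ?S y))"
    by (rule sum_mono) (rule per_block)
  also have "\<dots> = card (paths_len s r p) * \<delta> * sqrt (sqnorm ?S y)" by simp
  finally have "sqrt (sqnorm ?S (matop ?S ?M y)) \<le> card (paths_len s r p) * \<delta> * sqrt (sqnorm ?S y)" .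
  then have "(sqrt (sqnorm ?S (matop ?S ?M y)))\<^sup>2 \<le> (card (paths_len s r p) * \<delta> * sqrt (sqnorm ?S y))\<^sup>2"
    by (intro power_mono) (auto simp: sqnorm_nonneg)
  then show "sqnorm ?S (matop ?S ?M y) \<le> (card (paths_len s r p) * \<delta>)\<^sup>2 * sqnorm ?S y"
    by (simp add: sqnorm_nonneg power_mult_distrib)
qed

lemma Spath_commutes_imp_condA:
  fixes s r :: "'e::finite \<Rightarrow> 'v::finite"
  assumes ws: "weight_seq s r Zm" and p: "p \<ge> 1"
    and H: "\<forall>\<alpha>\<in>paths_len s r p. commutes_mod_compact (fock_paths s r) (Spath s r (snd \<alpha>)) (Zop s r Zm)"
  shows "condA s r Zm p"
  unfolding condA_iff_defect_tendsto LIMSEQ_iff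
proof (intro allI impI)
  fix \<epsilon> :: real assume \<epsilon>: "\<epsilon> > 0"
  define c where "c = real (card (paths_len s r p))"
  define \<delta> where "\<delta> = \<epsilon> / (2 * (c + 1))"
  have c: "c \<ge> 0" by (simp add: c_def)
  then have \<delta>: "\<delta> > 0" using \<epsilon> by (simp add: \<delta>_def)
  have "c * \<delta> = \<epsilon> * (c / (2 * (c + 1)))" by (simp add: \<delta>_def)
  also have "\<dots> < \<epsilon> * 1" using \<epsilon> c by (intro mult_strict_left_mono) auto
  finally have c\<delta>: "c * \<delta> < \<epsilon>" by simp
  have "\<forall>\<alpha>\<in>paths_len s r p. \<exists>N. \<forall>n\<ge>N. \<forall>x. sqnorm (paths_len s r (n + p))
      (\<lambda>\<gamma>. Spath s r (snd \<alpha>) (Zop s r Zm x) \<gamma> - Zop s r Zm (Spath s r (snd \<alpha>) x) \<gamma>)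
      \<le> \<delta>\<^sup>2 * sqnorm (paths_len s r n) x"
  proof
    fix \<alpha> assume \<alpha>: "\<alpha> \<in> paths_len s r p"
    show "\<exists>N. \<forall>n\<ge>N. \<forall>x. sqnorm (paths_len s r (n + p))
      (\<lambda>\<gamma>. Spath s r (snd \<alpha>) (Zop s r Zm x) \<gamma> - Zop s r Zm (Spath s r (snd \<alpha>) x) \<gamma>)
      \<le> \<delta>\<^sup>2 * sqnorm (paths_len s r n) x"
      by (rule Spath_commutes_eventually_small[OF ws \<alpha> p H[rule_format, OF \<alpha>] \<delta>])
  qed
  from bchoice[OF this] obtain N where N: "\<forall>\<alpha>\<in>paths_len s r p. \<forall>n\<ge>N \<alpha>. \<forall>x.
      sqnorm (paths_len s r (n + p))
        (\<lambda>\<gamma>. Spath s r (snd \<alpha>) (Zop s r Zm x) \<gamma> - Zop s r Zm (Spath s r (snd \<alpha>) x) \<gamma>)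
      \<le> \<delta>\<^sup>2 * sqnorm (paths_len s r n) x"
    by blast
  have "norm (fin_opnorm (paths_len s r (n + p)) (tensor_defect s r p Zm n) - 0) < \<epsilon>"
    if n: "n \<ge> (\<Sum>\<alpha>\<in>paths_len s r p. N \<alpha>)" for n
  proof -
    have "N \<alpha> \<le> n" if "\<alpha> \<in> paths_len s r p" for \<alpha>
      using n member_le_sum[OF that, of N] finite_paths_len[of s r p] by simp
    then have "fin_opnorm (paths_len s r (n + p)) (tensor_defect s r p Zm n) \<le> c * \<delta>"
      unfolding c_def using N \<delta> by (intro tensor_defect_norm_le[OF ws p]) auto
    then show ?thesis
      using c\<delta> fin_opnorm_nonneg[OF finite_paths_len, of s r "n + p" "tensor_defect s r p Zm n"] by simp
  qed
  then show "\<exists>no. \<forall>n\<ge>no. norm (fin_opnorm (paths_len s r (n + p)) (tensor_defect s r p Zm n) - 0) < \<epsilon>"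
    by blast
qed

lemma is_adj_Spath:
  fixes s r :: "'e::finite \<Rightarrow> 'v::finite"
  assumes "es \<noteq> []"
  shows "is_adj (fock_paths s r) (Spath s r es) (Spath_adj s r es)"
  unfolding is_adj_def using Spath_adj_ell2 inner2_Spath_adj[OF assms] by blast

lemma is_adj_Spath_unique:
  assumes es: "es \<noteq> []" and adj: "is_adj (fock_paths s r) (Spath s r es) T'"
    and y: "y \<in> ell2 (fock_paths s r)"
  shows "T' y = Spath_adj s r es y"
proof
  fix \<beta>
  show "T' y \<beta> = Spath_adj s r es y \<beta>"
  proof (cases "\<beta> \<in> fock_paths s r")
    case True
    define e where "e = (\<lambda>a. if a = \<beta> then 1 else 0 :: complex)"
    have "e \<in> ell2 (fock_paths s r)"
      by (rule ell2_finite_support(1)[of "{\<beta>}"]) (use True in \<open>auto simp: e_def\<close>)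
    then have "inner2 (fock_paths s r) (Spath s r es e) y = inner2 (fock_paths s r) e (T' y)"
      using adj y unfolding is_adj_def by blast
    then have "inner2 (fock_paths s r) e (T' y) = inner2 (fock_paths s r) e (Spath_adj s r es y)"
      unfolding inner2_Spath_adj[OF es] by (rule sym)
    then have "cnj (T' y \<beta>) = cnj (Spath_adj s r es y \<beta>)" unfolding e_def inner2_indicator[OF True] .
    then show ?thesis by simp
  next
    case False
    have "T' y \<in> ell2 (fock_paths s r)" using adj y unfolding is_adj_def by blast
    then show ?thesis using False by (simp add: ell2_outside Spath_adj_def)
  qed
qed

lemma condA_imp_Spath_adj_commutes:
  fixes s r :: "'e::finite \<Rightarrow> 'v::finite"
  assumes ws: "weight_seq s r Zm" and A: "condA s r Zm p"
    and \<alpha>: "\<alpha> \<in> paths_len s r p" and p: "p \<ge> 1"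
  shows "commutes_mod_compact (fock_paths s r) (Spath_adj s r (snd \<alpha>)) (Zop s r Zm)"
proof -
  obtain es: "snd \<alpha> \<noteq> []" "length (snd \<alpha>) = p" using path_of_length_pos[OF \<alpha> p] by blast
  have "compact_op (fock_paths s r)
      (graded_op (fock_paths s r) (\<lambda>a. length (snd a)) (\<lambda>m. m + p) 0 (Spath_adj_comm_kernel s r Zm (snd \<alpha>)))"
  proof (rule graded_op_compact[OF finite_level_length])
    show "inj_on (\<lambda>m. m + p) {0..}" by (auto simp: inj_on_def)
  qed (use Spath_adj_comm_level_bound[OF ws es(1) es(2)[symmetric]] A in
      \<open>simp_all add: condA_iff_defect_tendsto\<close>)
  then show ?thesis
    unfolding commutes_mod_compact_def Spath_adj_Zop_comm_graded[OF ws es(1)] es(2) .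
qed

theorem mainTheorem5:
  fixes s r :: "'e::finite \<Rightarrow> 'v::finite"
    and Zm :: "nat \<Rightarrow> ('v,'e) gpath \<Rightarrow> ('v,'e) gpath \<Rightarrow> complex"
    and p :: nat
  assumes "no_sinks s"
    and "weight_seq s r Zm"
    and "p \<ge> 1"
  shows "(condA s r Zm p \<longleftrightarrow>
            (\<forall>\<alpha>\<in>paths_len s r p.
               commutes_mod_compact (fock_paths s r) (Spath s r (snd \<alpha>)) (Zop s r Zm)))
       \<and> (condA s r Zm p \<longrightarrow>
            (\<forall>\<alpha>\<in>paths_len s r p.
               (\<exists>T'. is_adj (fock_paths s r) (Spath s r (snd \<alpha>)) T') \<and>
               (\<forall>T'. is_adj (fock_paths s r) (Spath s r (snd \<alpha>)) T' \<longrightarrow>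
                  commutes_mod_compact (fock_paths s r) T' (Zop s r Zm))))"
proof -
  note ws = assms(2) and p = assms(3)
  have adjoint: "commutes_mod_compact (fock_paths s r) T' (Zop s r Zm)"
    if A: "condA s r Zm p" and \<alpha>: "\<alpha> \<in> paths_len s r p"
      and adj: "is_adj (fock_paths s r) (Spath s r (snd \<alpha>)) T'" for \<alpha> T'
  proof -
    have es: "snd \<alpha> \<noteq> []" using path_of_length_pos[OF \<alpha> p] by blast
    have "commutes_mod_compact (fock_paths s r) T' (Zop s r Zm)
        \<longleftrightarrow> commutes_mod_compact (fock_paths s r) (Spath_adj s r (snd \<alpha>)) (Zop s r Zm)"
      by (rule commutes_mod_compact_cong) (simp_all add: is_adj_Spath_unique[OF es adj] Zop_ell2[OF ws])
    then show ?thesis using condA_imp_Spath_adj_commutes[OF ws A \<alpha> p] by simp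
  qed
  have exists: "\<exists>T'. is_adj (fock_paths s r) (Spath s r (snd \<alpha>)) T'" if "\<alpha> \<in> paths_len s r p" for \<alpha>
    using is_adj_Spath[OF conjunct1[OF path_of_length_pos[OF that p]]] by blast
  have iff: "condA s r Zm p \<longleftrightarrow>
      (\<forall>\<alpha>\<in>paths_len s r p. commutes_mod_compact (fock_paths s r) (Spath s r (snd \<alpha>)) (Zop s r Zm))"
    using condA_imp_Spath_commutes[OF ws _ _ p] Spath_commutes_imp_condA[OF ws p] by blast
  show ?thesis
    by (intro conjI impI ballI allI iff exists adjoint)
qed
end
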